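(* Let $m\ge 1$ and let $X\subset\sqrt{m}\,\mathbb{S}^{m-1}$ be a spherical $2$-design with $|X|=n$ which is an $s$-distance set and has degree $S=s$, with projection matrices $F_0,\dots,F_s$, normalized Gram matrix $G$ and predegree polynomials $q_0,\dots,q_s$. Then $X$ has the structure of a $Q$-polynomial association scheme with respect to the idempotents $F_0,\dots,F_s$ if and only if $F_s=\frac1n q_s((nG)^\circ)$.
   Context: Setting: $\bm{x}\cdot\bm{y}$ is the standard inner product on $\mathbb{R}^m$; $\sqrt{m}\,\mathbb{S}^{m-1}=\{\bm x\in\mathbb{R}^m:\bm x\cdot\bm x=m\}$; $X$ is a finite subset with $n=|X|$. $A(X)=\{\bm{x}\cdot\bm{y}:\bm{x}\ne\bm{y}\in X\}$, $A'(X)=A(X)\cup\{m\}$; $X$ is an $s$-distance set if $|A(X)|=s$. $X$ is a spherical $2$-design if the average over $X$ of every polynomial of degree at most $2$ equals its average over the sphere (equivalently $\sum_{\bm y\in X}\bm x\cdot\bm y=0$ and $\frac1n\sum_{\bm z}(\bm x\cdot\bm z)(\bm z\cdot\bm y)=\bm x\cdot\bm y$ for all $\bm x,\bm y\in X$). $C(X)$: real functions on $X$ with $(f,g)=\frac1n\sum_{\bm x}f(\bm x)g(\bm x)$. $\zeta_{\bm a}(p)(\bm x)=p(\bm a\cdot\bm x)$. $\mathrm{Pol}_0(X)$ = constants, $\mathrm{Pol}_1(X)=\mathrm{Span}\{\zeta_{\bm a}(p):\bm a\in X,\deg p\le1\}$, $\mathrm{Pol}_k(X)=\mathrm{Span}\{fg:f\in\mathrm{Pol}_1(X),g\in\mathrm{Pol}_{k-1}(X)\}$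 (equivalently $\mathrm{Span}\{\zeta_{\bm a}(p):\deg p\le k\}$). Degree $S=\min\{i:\mathrm{Pol}_i(X)=C(X)\}$. $\mathrm{Harm}_0=\mathrm{Pol}_0$, $\mathrm{Harm}_k=\mathrm{Pol}_k\cap\mathrm{Pol}_{k-1}^\perp$. $F_i$ ($0\le i\le S$) is the $X\times X$ matrix of the orthogonal projection onto $\mathrm{Harm}_i(X)$, matrices acting by $(Mf)(\bm x)=\sum_{\bm y}M_{\bm x,\bm y}f(\bm y)$. $G=\frac1n(\bm x\cdot\bm y)_{\bm x,\bm y\in X}$; $p(M^\circ)$ denotes entrywise application of $p$. $\kappa_\alpha=|\{(\bm x,\bm y)\in X^2:\bm x\cdot\bm y=\alpha\}|$; $\langle p,q\rangle=\frac1{n^2}\sum_{\alpha\in A'(X)}\kappa_\alpha p(\alpha)q(\alpha)$ on $\mathbb{R}[t]/(\prod_{\alpha\in A'(X)}(t-\alpha))$; predegree polynomials $q_0,\dots,q_s$: $\deg q_k=k$, $\langle q_k,q_h\rangle=\delta_{k,h}q_k(m)$. With $R_\alpha=\{(\bm x,\bm y):\bm x\cdot\bm y=\alpha\}$, "$X$ has the structure of a $Q$-polynomial association scheme with respect to the idempotents $F_0,\dots,F_s$" means $(X,\{R_\alpha\}_{\alpha\in A'(X)})$ is a symmetric association scheme with primitive idempotents $F_0,\dots,F_s$ and for each $i$ there is a polynomial $v_i^*$ of degree $i$ with $nF_i=v_i^*((nF_1)^\circ)$. *)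

theory Defs
  imports "HOL-Analysis.Analysis" "HOL-Computational_Algebra.Polynomial"
begin

text \<open>Points live in a Euclidean space of dimension m = DIM('a); X is a finite set of points.
  Functions on X are represented as functions 'a => real vanishing outside X;
  X x X matrices as functions 'a => 'a => real vanishing outside X x X.\<close>

definition on_sphere :: "'a::euclidean_space set \<Rightarrow> bool" where
  "on_sphere X \<longleftrightarrow> (\<forall>x\<in>X. x \<bullet> x = real DIM('a))"

definition Aset :: "'a::euclidean_space set \<Rightarrow> real set" where
  "Aset X = {x \<bullet> y | x y. x \<in> X \<and> y \<in> X \<and> x \<noteq> y}"

definition Aset' :: "'a::euclidean_space set \<Rightarrow> real set" where
  "Aset' X = insert (real DIM('a)) (Aset X)"

definition s_distance :: "'a::euclidean_space set \<Rightarrow> nat \<Rightarrow> bool" where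
  "s_distance X s \<longleftrightarrow> card (Aset X) = s"

text \<open>Spherical 2-design, in the equivalent form given in the paper's setting.\<close>
definition design2 :: "'a::euclidean_space set \<Rightarrow> bool" where
  "design2 X \<longleftrightarrow> finite X \<and> X \<noteq> {} \<and>
     (\<forall>x\<in>X. (\<Sum>y\<in>X. x \<bullet> y) = 0) \<and>
     (\<forall>x\<in>X. \<forall>y\<in>X. (1 / real (card X)) * (\<Sum>z\<in>X. (x \<bullet> z) * (z \<bullet> y)) = x \<bullet> y)"

definition CX :: "'a set \<Rightarrow> ('a \<Rightarrow> real) set" where
  "CX X = {f. \<forall>x. x \<notin> X \<longrightarrow> f x = 0}"

definition ipX :: "'a set \<Rightarrow> ('a \<Rightarrow> real) \<Rightarrow> ('a \<Rightarrow> real) \<Rightarrow> real" where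
  "ipX X f g = (1 / real (card X)) * (\<Sum>x\<in>X. f x * g x)"

text \<open>Pol_k(X) = Span{zeta_a(p) : a in X, deg p <= k}; since zeta_a is linear in p,
  the span is the set of sums over a in X of zeta_a(P a).\<close>
definition Pol :: "'a::euclidean_space set \<Rightarrow> nat \<Rightarrow> ('a \<Rightarrow> real) set" where
  "Pol X k = {f. \<exists>P :: 'a \<Rightarrow> real poly. (\<forall>a\<in>X. degree (P a) \<le> k) \<and>
      f = (\<lambda>x. if x \<in> X then (\<Sum>a\<in>X. poly (P a) (a \<bullet> x)) else 0)}"

definition degX :: "'a::euclidean_space set \<Rightarrow> nat" where
  "degX X = (LEAST i. Pol X i = CX X)"

definition Harm :: "'a::euclidean_space set \<Rightarrow> nat \<Rightarrow> ('a \<Rightarrow> real) set" where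
  "Harm X k = (if k = 0 then Pol X 0
     else {f \<in> Pol X k. \<forall>g\<in>Pol X (k - 1). ipX X f g = 0})"

definition matact :: "'a set \<Rightarrow> ('a \<Rightarrow> 'a \<Rightarrow> real) \<Rightarrow> ('a \<Rightarrow> real) \<Rightarrow> ('a \<Rightarrow> real)" where
  "matact X M f = (\<lambda>x. if x \<in> X then (\<Sum>y\<in>X. M x y * f y) else 0)"

definition is_matrix :: "'a set \<Rightarrow> ('a \<Rightarrow> 'a \<Rightarrow> real) \<Rightarrow> bool" where
  "is_matrix X M \<longleftrightarrow> (\<forall>x y. x \<notin> X \<or> y \<notin> X \<longrightarrow> M x y = 0)"

definition Fproj :: "'a::euclidean_space set \<Rightarrow> nat \<Rightarrow> ('a \<Rightarrow> 'a \<Rightarrow> real)" where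
  "Fproj X i = (THE M. is_matrix X M \<and>
     (\<forall>f\<in>CX X. matact X M f \<in> Harm X i \<and>
        (\<forall>g\<in>Harm X i. ipX X (\<lambda>x. f x - matact X M f x) g = 0)))"

definition Gram :: "'a::euclidean_space set \<Rightarrow> ('a \<Rightarrow> 'a \<Rightarrow> real)" where
  "Gram X = (\<lambda>x y. if x \<in> X \<and> y \<in> X then (x \<bullet> y) / real (card X) else 0)"

definition kappa :: "'a::euclidean_space set \<Rightarrow> real \<Rightarrow> nat" where
  "kappa X \<alpha> = card {(x, y). x \<in> X \<and> y \<in> X \<and> x \<bullet> y = \<alpha>}"

definition ip_poly :: "'a::euclidean_space set \<Rightarrow> real poly \<Rightarrow> real poly \<Rightarrow> real" where
  "ip_poly X p q = (1 / (real (card X))^2) *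
     (\<Sum>\<alpha>\<in>Aset' X. real (kappa X \<alpha>) * poly p \<alpha> * poly q \<alpha>)"

definition predegree :: "'a::euclidean_space set \<Rightarrow> nat \<Rightarrow> (nat \<Rightarrow> real poly) \<Rightarrow> bool" where
  "predegree X s q \<longleftrightarrow>
     (\<forall>k\<le>s. q k \<noteq> 0 \<and> degree (q k) = k) \<and>
     (\<forall>k\<le>s. \<forall>h\<le>s. ip_poly X (q k) (q h) =
        (if k = h then poly (q k) (real DIM('a)) else 0))"

definition Rel :: "'a::euclidean_space set \<Rightarrow> real \<Rightarrow> ('a \<times> 'a) set" where
  "Rel X \<alpha> = {(x, y). x \<in> X \<and> y \<in> X \<and> x \<bullet> y = \<alpha>}"

definition sym_assoc_scheme :: "'a set \<Rightarrow> real set \<Rightarrow> (real \<Rightarrow> ('a \<times> 'a) set) \<Rightarrow> bool" where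
  "sym_assoc_scheme X I R \<longleftrightarrow> finite X \<and> finite I \<and>
     (\<forall>\<alpha>\<in>I. R \<alpha> \<subseteq> X \<times> X \<and> R \<alpha> \<noteq> {}) \<and>
     (\<forall>x\<in>X. \<forall>y\<in>X. \<exists>!\<alpha>. \<alpha> \<in> I \<and> (x, y) \<in> R \<alpha>) \<and>
     (\<exists>\<alpha>\<in>I. R \<alpha> = Id_on X) \<and>
     (\<forall>\<alpha>\<in>I. \<forall>x y. (x, y) \<in> R \<alpha> \<longrightarrow> (y, x) \<in> R \<alpha>) \<and>
     (\<forall>\<alpha>\<in>I. \<forall>\<beta>\<in>I. \<forall>\<gamma>\<in>I. \<exists>p::nat. \<forall>x y. (x, y) \<in> R \<gamma> \<longrightarrow>
        card {z \<in> X. (x, z) \<in> R \<alpha> \<and> (z, y) \<in> R \<beta>} = p)"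

definition adj :: "'a set \<Rightarrow> ('a \<times> 'a) set \<Rightarrow> ('a \<Rightarrow> 'a \<Rightarrow> real)" where
  "adj X r = (\<lambda>x y. if x \<in> X \<and> y \<in> X \<and> (x, y) \<in> r then 1 else 0)"

definition mmul :: "'a set \<Rightarrow> ('a \<Rightarrow> 'a \<Rightarrow> real) \<Rightarrow> ('a \<Rightarrow> 'a \<Rightarrow> real) \<Rightarrow> ('a \<Rightarrow> 'a \<Rightarrow> real)" where
  "mmul X M N = (\<lambda>x y. \<Sum>z\<in>X. M x z * N z y)"

definition bose_mesner :: "'a set \<Rightarrow> real set \<Rightarrow> (real \<Rightarrow> ('a \<times> 'a) set) \<Rightarrow> ('a \<Rightarrow> 'a \<Rightarrow> real) set" where
  "bose_mesner X I R = {M. \<exists>c :: real \<Rightarrow> real.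
      M = (\<lambda>x y. \<Sum>\<alpha>\<in>I. c \<alpha> * adj X (R \<alpha>) x y)}"

definition idem :: "'a set \<Rightarrow> ('a \<Rightarrow> 'a \<Rightarrow> real) \<Rightarrow> bool" where
  "idem X E \<longleftrightarrow> mmul X E E = E"

definition primitive_idempotents :: "'a set \<Rightarrow> real set \<Rightarrow> (real \<Rightarrow> ('a \<times> 'a) set) \<Rightarrow> ('a \<Rightarrow> 'a \<Rightarrow> real) set" where
  "primitive_idempotents X I R = {E \<in> bose_mesner X I R. idem X E \<and> E \<noteq> (\<lambda>x y. 0) \<and>
     \<not> (\<exists>E1\<in>bose_mesner X I R. \<exists>E2\<in>bose_mesner X I R.
          idem X E1 \<and> idem X E2 \<and> E1 \<noteq> (\<lambda>x y. 0) \<and> E2 \<noteq> (\<lambda>x y. 0) \<and>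
          mmul X E1 E2 = (\<lambda>x y. 0) \<and> E = (\<lambda>x y. E1 x y + E2 x y))}"

definition Q_poly_scheme :: "'a::euclidean_space set \<Rightarrow> nat \<Rightarrow> bool" where
  "Q_poly_scheme X s \<longleftrightarrow>
     sym_assoc_scheme X (Aset' X) (Rel X) \<and>
     primitive_idempotents X (Aset' X) (Rel X) = Fproj X ` {0..s} \<and>
     (\<forall>i\<le>s. \<exists>v :: real poly. degree v = i \<and>
        (\<forall>x\<in>X. \<forall>y\<in>X. real (card X) * Fproj X i x y =
                         poly v (real (card X) * Fproj X 1 x y)))"

end

theory Submission
  imports Defs
begin

text \<open>
  Let n = |X| and let E_k be the zonal matrix (1/n) q_k((x \<bullet> y)). Two facts drive the proof.
  Since X is a 2-design, the normalized Gram matrix is the projection F_1 onto the linear harmonic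
  functions. And Pol_k(X) is closed under multiplication by linear forms y \<bullet> x, because a product
  of k linear forms restricted to X lies in the span of the k-th powers (a \<bullet> x)^k, a \<in> X.

  If F_s = E_s, then every zonal function q_s(y \<bullet> x) is orthogonal to Pol_(s-1). On the s + 1
  inner product values, t q_(k+1)(t) = c_k q_k(t) + ... + c_s q_s(t) with c_k \<noteq> 0, so this
  orthogonality propagates down to all k \<ge> 1. Hence zonal functions of different degrees are
  orthogonal, E_k = F_k for every k, the E_k are orthogonal idempotents spanning the algebra of all
  functions of x \<bullet> y, and E_k is a polynomial of degree k in E_1 = G: a Q-polynomial scheme.

  Conversely, if n F_s = V((x \<bullet> y)) for some V of degree s, then V is orthogonal to
  q_0, ..., q_(s-1) because the columns of F_s are harmonic of degree s, and F_s being a symmetric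
  idempotent normalises V; together these force V = q_s.
\<close>

section \<open>Orthogonal projections onto spans of functions on a finite set\<close>

definition inner_on :: "'a set \<Rightarrow> ('a \<Rightarrow> real) \<Rightarrow> ('a \<Rightarrow> real) \<Rightarrow> real" where
  "inner_on X f g = (\<Sum>x\<in>X. f x * g x)"

lemma inner_on_cong:
  "(\<And>x. x \<in> X \<Longrightarrow> f x = f' x) \<Longrightarrow> (\<And>x. x \<in> X \<Longrightarrow> g x = g' x) \<Longrightarrow>
   inner_on X f g = inner_on X f' g'"
  by (simp add: inner_on_def)

lemma inner_on_commute: "inner_on X f g = inner_on X g f"
  by (simp add: inner_on_def mult.commute)

lemma inner_on_diff_left: "inner_on X (\<lambda>x. f x - g x) h = inner_on X f h - inner_on X g h"
  by (simp add: inner_on_def algebra_simps sum_subtractf)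

lemma inner_on_diff_right: "inner_on X h (\<lambda>x. f x - g x) = inner_on X h f - inner_on X h g"
  by (simp add: inner_on_def algebra_simps sum_subtractf)

lemma inner_on_add_right: "inner_on X h (\<lambda>x. f x + g x) = inner_on X h f + inner_on X h g"
  by (simp add: inner_on_def algebra_simps sum.distrib)

lemma inner_on_scale_left: "inner_on X (\<lambda>x. a * f x) h = a * inner_on X f h"
  by (simp add: inner_on_def algebra_simps sum_distrib_left)

lemma inner_on_scale_right: "inner_on X h (\<lambda>x. a * f x) = a * inner_on X h f"
  by (simp add: inner_on_def algebra_simps sum_distrib_left)

lemma inner_on_sum_right:
  "finite I \<Longrightarrow> inner_on X h (\<lambda>x. \<Sum>i\<in>I. f i x) = (\<Sum>i\<in>I. inner_on X h (f i))"
  by (simp add: inner_on_def sum_distrib_left) (rule sum.swap)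

lemma inner_on_sum_scale_left:
  "finite A \<Longrightarrow> inner_on X (\<lambda>x. \<Sum>a\<in>A. c a * f a x) g = (\<Sum>a\<in>A. c a * inner_on X (f a) g)"
  by (simp add: inner_on_def sum_distrib_left sum_distrib_right mult_ac) (rule sum.swap)

lemma inner_on_sum_scale_right:
  "finite A \<Longrightarrow> inner_on X g (\<lambda>x. \<Sum>a\<in>A. c a * f a x) = (\<Sum>a\<in>A. c a * inner_on X g (f a))"
  by (simp add: inner_on_def sum_distrib_left sum_distrib_right mult_ac) (rule sum.swap)

lemma inner_on_self_eq_0: "finite X \<Longrightarrow> inner_on X f f = 0 \<Longrightarrow> x \<in> X \<Longrightarrow> f x = 0"
  unfolding inner_on_def using sum_nonneg_eq_0_iff[of X "\<lambda>x. f x * f x"] by auto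

lemma ipX_eq_inner_on: "ipX X f g = inner_on X f g / real (card X)"
  by (simp add: ipX_def inner_on_def)

definition span_on :: "'a set \<Rightarrow> 'i set \<Rightarrow> ('i \<Rightarrow> 'a \<Rightarrow> real) \<Rightarrow> ('a \<Rightarrow> real) set" where
  "span_on X I \<phi> = {f. \<exists>c. f = (\<lambda>x. if x \<in> X then \<Sum>i\<in>I. c i * \<phi> i x else 0)}"

lemma span_on_lincomb:
  assumes "f \<in> span_on X I \<phi>" "g \<in> span_on X I \<phi>"
  shows "(\<lambda>x. a * f x + b * g x) \<in> span_on X I \<phi>"
proof -
  obtain c d where "f = (\<lambda>x. if x \<in> X then \<Sum>i\<in>I. c i * \<phi> i x else 0)"
    and "g = (\<lambda>x. if x \<in> X then \<Sum>i\<in>I. d i * \<phi> i x else 0)"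
    using assms by (auto simp: span_on_def)
  then show ?thesis unfolding span_on_def
    by (intro CollectI exI[of _ "\<lambda>i. a * c i + b * d i"])
       (auto simp: sum_distrib_left sum.distrib algebra_simps)
qed

lemma span_on_sum:
  "finite J \<Longrightarrow> (\<And>j. j \<in> J \<Longrightarrow> f j \<in> span_on X I \<phi>) \<Longrightarrow> (\<lambda>x. \<Sum>j\<in>J. f j x) \<in> span_on X I \<phi>"
proof (induction J rule: finite_induct)
  case empty
  show ?case unfolding span_on_def by (intro CollectI exI[of _ "\<lambda>_. 0"]) auto
next
  case (insert j J)
  then show ?case using span_on_lincomb[of "f j" X I \<phi> _ 1 1] by simp
qed

lemma span_on_mono: "finite J \<Longrightarrow> I \<subseteq> J \<Longrightarrow> span_on X I \<phi> \<subseteq> span_on X J \<phi>"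
proof
  fix f assume J: "finite J" "I \<subseteq> J" and "f \<in> span_on X I \<phi>"
  then obtain c where c: "f = (\<lambda>x. if x \<in> X then \<Sum>i\<in>I. c i * \<phi> i x else 0)"
    by (auto simp: span_on_def)
  have "(\<Sum>i\<in>J. (if i \<in> I then c i else 0) * \<phi> i x) = (\<Sum>i\<in>I. c i * \<phi> i x)" for x
  proof -
    have "(\<Sum>i\<in>J. (if i \<in> I then c i else 0) * \<phi> i x) = (\<Sum>i\<in>J. if i \<in> I then c i * \<phi> i x else 0)"
      by (rule sum.cong) auto
    also have "\<dots> = (\<Sum>i\<in>I. c i * \<phi> i x)"
      using J by (simp add: sum.inter_restrict[symmetric] Int_absorb1)
    finally show ?thesis .
  qed
  then show "f \<in> span_on X J \<phi>" unfolding span_on_def c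
    by (intro CollectI exI[of _ "\<lambda>i. if i \<in> I then c i else 0"]) auto
qed

lemma span_on_generator:
  assumes "finite I" "i \<in> I"
  shows "(\<lambda>x. if x \<in> X then \<phi> i x else 0) \<in> span_on X I \<phi>"
proof -
  have delta: "(\<Sum>j\<in>I. (if j = i then 1 else 0) * \<phi> j x) = \<phi> i x" for x
  proof -
    have "(\<Sum>j\<in>I. (if j = i then 1 else 0) * \<phi> j x) = (\<Sum>j\<in>I. if j = i then \<phi> j x else 0)"
      by (rule sum.cong) auto
    then show ?thesis using assms by simp
  qed
  then show ?thesis unfolding span_on_def
    by (intro CollectI exI[of _ "\<lambda>j. if j = i then 1 else 0"]) (simp only: delta)
qed

lemma span_on_insert:
  assumes "finite I" "i \<notin> I"
  shows "span_on X (insert i I) \<phi> =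
    {\<lambda>x. c * (if x \<in> X then \<phi> i x else 0) + h x | c h. h \<in> span_on X I \<phi>}"
proof (intro set_eqI iffI)
  fix g assume "g \<in> span_on X (insert i I) \<phi>"
  then obtain c where "g = (\<lambda>x. if x \<in> X then \<Sum>j\<in>insert i I. c j * \<phi> j x else 0)"
    by (auto simp: span_on_def)
  then have "g = (\<lambda>x. c i * (if x \<in> X then \<phi> i x else 0) +
      (if x \<in> X then \<Sum>j\<in>I. c j * \<phi> j x else 0))"
    using assms by auto
  moreover have "(\<lambda>x. if x \<in> X then \<Sum>j\<in>I. c j * \<phi> j x else 0) \<in> span_on X I \<phi>"
    by (auto simp: span_on_def)
  ultimately show "g \<in> {\<lambda>x. c * (if x \<in> X then \<phi> i x else 0) + h x | c h. h \<in> span_on X I \<phi>}"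
    by (intro CollectI exI[of _ "c i"] exI[of _ "\<lambda>x. if x \<in> X then \<Sum>j\<in>I. c j * \<phi> j x else 0"])
      simp
next
  fix g assume "g \<in> {\<lambda>x. c * (if x \<in> X then \<phi> i x else 0) + h x | c h. h \<in> span_on X I \<phi>}"
  then obtain c d where g: "g = (\<lambda>x. c * (if x \<in> X then \<phi> i x else 0) +
      (if x \<in> X then \<Sum>j\<in>I. d j * \<phi> j x else 0))"
    by (auto simp: span_on_def)
  have "(\<Sum>j\<in>I. (d(i := c)) j * \<phi> j x) = (\<Sum>j\<in>I. d j * \<phi> j x)" for x
    using assms by (intro sum.cong) auto
  then have "g = (\<lambda>x. if x \<in> X then \<Sum>j\<in>insert i I. (d(i := c)) j * \<phi> j x else 0)"
    using assms by (auto simp: g)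
  then show "g \<in> span_on X (insert i I) \<phi>" by (auto simp: span_on_def)
qed

definition is_projection :: "'a set \<Rightarrow> ('a \<Rightarrow> real) set \<Rightarrow> ('a \<Rightarrow> 'a \<Rightarrow> real) \<Rightarrow> bool" where
  "is_projection X H M \<longleftrightarrow> is_matrix X M \<and>
     (\<forall>f. matact X M f \<in> H \<and> (\<forall>g\<in>H. inner_on X (\<lambda>x. f x - matact X M f x) g = 0))"

lemma is_projection_add_orthogonal:
  assumes M: "is_projection X H M" and uH: "\<forall>g\<in>H. inner_on X u g = 0"
    and uu: "inner_on X u u \<noteq> 0" and u_out: "\<forall>x. x \<notin> X \<longrightarrow> u x = 0"
  shows "is_projection X {\<lambda>x. c * u x + h x | c h. h \<in> H}
           (\<lambda>x y. M x y + u x * u y / inner_on X u u)"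
    (is "is_projection X ?H' ?M'")
proof -
  have MH: "matact X M f \<in> H" and M_orth: "g \<in> H \<Longrightarrow> inner_on X (\<lambda>x. f x - matact X M f x) g = 0"
    for f g using M by (auto simp: is_projection_def)
  have act: "matact X ?M' f = (\<lambda>x. (inner_on X u f / inner_on X u u) * u x + matact X M f x)" for f
    by (rule ext) (auto simp: matact_def u_out algebra_simps sum.distrib sum_divide_distrib
                               sum_distrib_left inner_on_def)
  have orth: "inner_on X (\<lambda>x. f x - matact X ?M' f x) g = 0" if "g \<in> ?H'" for f g
  proof -
    obtain c h where g: "g = (\<lambda>x. c * u x + h x)" and h: "h \<in> H" using \<open>g \<in> ?H'\<close> by blast
    define k where "k = inner_on X u f / inner_on X u u"
    define r where "r = (\<lambda>x. f x - matact X M f x)"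
    have r: "(\<lambda>x. f x - matact X ?M' f x) = (\<lambda>x. r x - k * u x)"
      by (simp add: act r_def k_def algebra_simps)
    have "inner_on X r u = inner_on X f u - inner_on X u (matact X M f)"
      by (simp add: r_def inner_on_diff_left inner_on_commute)
    also have "\<dots> = k * inner_on X u u"
      using uH MH uu by (simp add: k_def inner_on_commute[of X f u])
    finally have ru: "inner_on X r u = k * inner_on X u u" .
    have "inner_on X (\<lambda>x. r x - k * u x) g =
        c * (inner_on X r u - k * inner_on X u u) + (inner_on X r h - k * inner_on X u h)"
      by (simp add: g inner_on_diff_left inner_on_add_right inner_on_scale_left
                    inner_on_scale_right algebra_simps)
    also have "\<dots> = 0" using ru M_orth[OF h] uH h by (simp add: r_def)
    finally show ?thesis by (simp add: r)
  qed
  have "matact X ?M' f \<in> ?H'" for f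
    unfolding act using MH[of f]
    by (intro CollectI exI[of _ "inner_on X u f / inner_on X u u"] exI[of _ "matact X M f"]) simp
  moreover have "is_matrix X ?M'" using M u_out by (auto simp: is_projection_def is_matrix_def)
  ultimately show ?thesis using orth by (auto simp: is_projection_def)
qed

lemma span_on_shift:
  assumes m: "m \<in> span_on X I \<phi>"
  shows "{\<lambda>x. c * v x + h x | c h. h \<in> span_on X I \<phi>} =
    {\<lambda>x. c * (v x - m x) + h x | c h. h \<in> span_on X I \<phi>}"
proof (intro set_eqI iffI)
  fix g assume "g \<in> {\<lambda>x. c * v x + h x | c h. h \<in> span_on X I \<phi>}"
  then obtain c h where h: "h \<in> span_on X I \<phi>" and g: "g = (\<lambda>x. c * v x + h x)" by blast
  define h' where "h' = (\<lambda>x. c * m x + 1 * h x)"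
  have "h' \<in> span_on X I \<phi>" unfolding h'_def by (rule span_on_lincomb[OF m h])
  moreover have "g = (\<lambda>x. c * (v x - m x) + h' x)" by (simp add: g h'_def algebra_simps)
  ultimately show "g \<in> {\<lambda>x. c * (v x - m x) + h x | c h. h \<in> span_on X I \<phi>}" by blast
next
  fix g assume "g \<in> {\<lambda>x. c * (v x - m x) + h x | c h. h \<in> span_on X I \<phi>}"
  then obtain c h where h: "h \<in> span_on X I \<phi>" and g: "g = (\<lambda>x. c * (v x - m x) + h x)" by blast
  define h' where "h' = (\<lambda>x. - c * m x + 1 * h x)"
  have "h' \<in> span_on X I \<phi>" unfolding h'_def by (rule span_on_lincomb[OF m h])
  moreover have "g = (\<lambda>x. c * v x + h' x)" by (simp add: g h'_def algebra_simps)
  ultimately show "g \<in> {\<lambda>x. c * v x + h x | c h. h \<in> span_on X I \<phi>}" by blast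
qed

text \<open>Gram--Schmidt: adjoining a generator v adds the component of v orthogonal to the current
  span; if that component vanishes, the span does not grow.\<close>
lemma projection_onto_span_on_exists:
  assumes "finite X" "finite I"
  shows "\<exists>M. is_projection X (span_on X I \<phi>) M"
  using assms(2)
proof (induction I rule: finite_induct)
  case empty
  have "(\<lambda>x. if x \<in> X then \<Sum>i\<in>{}. c i * \<phi> i x else 0) = (\<lambda>x. 0)" for c
    by (rule ext) simp
  then have "span_on X {} \<phi> = {\<lambda>x. 0}" by (simp add: span_on_def)
  moreover have "matact X (\<lambda>x y. 0) f = (\<lambda>x. 0)" for f by (rule ext) (simp add: matact_def)
  ultimately show ?case
    by (intro exI[of _ "\<lambda>x y. 0"]) (simp add: is_projection_def is_matrix_def inner_on_def)
next
  case (insert i I)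
  then obtain M where M: "is_projection X (span_on X I \<phi>) M" by blast
  define v where "v = (\<lambda>x. if x \<in> X then \<phi> i x else 0)"
  define u where "u = (\<lambda>x. v x - matact X M v x)"
  have u_out: "\<forall>x. x \<notin> X \<longrightarrow> u x = 0" by (simp add: u_def v_def matact_def)
  have uI: "\<forall>g\<in>span_on X I \<phi>. inner_on X u g = 0"
    using M by (simp add: is_projection_def u_def)
  have span_eq: "span_on X (insert i I) \<phi> = {\<lambda>x. c * u x + h x | c h. h \<in> span_on X I \<phi>}"
    using span_on_insert[OF insert(1,2), of X \<phi>] span_on_shift[of "matact X M v" X I \<phi> v] M
    by (simp add: is_projection_def u_def v_def)
  show ?case
  proof (cases "inner_on X u u = 0")
    case True
    then have "u x = 0" for x using inner_on_self_eq_0[OF assms(1)] u_out by blast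
    then have "u = (\<lambda>x. 0)" by (simp add: fun_eq_iff)
    then have "span_on X (insert i I) \<phi> = span_on X I \<phi>" by (simp add: span_eq)
    then show ?thesis using M by auto
  next
    case False
    show ?thesis
      unfolding span_eq by (rule exI, rule is_projection_add_orthogonal[OF M uI False u_out])
  qed
qed

lemma is_projection_fixes:
  assumes "finite X" "is_projection X H M" "h \<in> H"
    and H_diff: "\<And>f g. f \<in> H \<Longrightarrow> g \<in> H \<Longrightarrow> (\<lambda>x. f x - g x) \<in> H"
    and H_out: "\<And>f x. f \<in> H \<Longrightarrow> x \<notin> X \<Longrightarrow> f x = 0"
  shows "matact X M h = h"
proof -
  define r where "r = (\<lambda>x. h x - matact X M h x)"
  have "r \<in> H" unfolding r_def using assms(2,3) H_diff by (auto simp: is_projection_def)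
  moreover from this have "inner_on X r r = 0" using assms(2) by (auto simp: is_projection_def r_def)
  ultimately have "r x = 0" for x using inner_on_self_eq_0[OF assms(1)] H_out by blast
  then show ?thesis by (auto simp: r_def fun_eq_iff)
qed

section \<open>The function spaces Pol_k(X) and Harm_k(X)\<close>

lemma poly_eq_sum_coeff_atMost:
  fixes p :: "'a::comm_semiring_1 poly"
  assumes "degree p \<le> k"
  shows "poly p t = (\<Sum>j\<le>k. coeff p j * t ^ j)"
proof -
  have "poly p t = poly (\<Sum>j\<le>k. monom (coeff p j) j) t"
    using assms by (simp add: poly_as_sum_of_monoms')
  then show ?thesis by (simp add: poly_sum poly_monom)
qed

lemma Pol_intro:
  "(\<And>a. a \<in> X \<Longrightarrow> degree (P a) \<le> k) \<Longrightarrow>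
   (\<lambda>x. if x \<in> X then \<Sum>a\<in>X. poly (P a) (a \<bullet> x) else 0) \<in> Pol X k"
  unfolding Pol_def by blast

lemma Pol_eq_span_on:
  fixes X :: "'a::euclidean_space set"
  shows "Pol X k = span_on X (X \<times> {..k}) (\<lambda>(a, j) x. (a \<bullet> x) ^ j)"
proof -
  have expand: "(\<Sum>a\<in>X. poly (P a) (a \<bullet> x)) =
      (\<Sum>(a, j)\<in>X \<times> {..k}. coeff (P a) j * (a \<bullet> x) ^ j)"
    if "\<forall>a\<in>X. degree (P a) \<le> k" for P :: "'a \<Rightarrow> real poly" and x
  proof -
    have "(\<Sum>a\<in>X. poly (P a) (a \<bullet> x)) = (\<Sum>a\<in>X. \<Sum>j\<le>k. coeff (P a) j * (a \<bullet> x) ^ j)"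
      using that by (intro sum.cong refl poly_eq_sum_coeff_atMost) auto
    then show ?thesis by (simp add: sum.cartesian_product)
  qed
  show ?thesis
  proof (intro set_eqI iffI)
    fix f assume "f \<in> Pol X k"
    then obtain P where P: "\<forall>a\<in>X. degree (P a) \<le> k"
      and f: "f = (\<lambda>x. if x \<in> X then \<Sum>a\<in>X. poly (P a) (a \<bullet> x) else 0)"
      by (auto simp: Pol_def)
    have "f = (\<lambda>x. if x \<in> X then
        \<Sum>i\<in>X \<times> {..k}. (\<lambda>(a, j). coeff (P a) j) i * (\<lambda>(a, j) x. (a \<bullet> x) ^ j) i x else 0)"
      by (rule ext) (simp add: f expand[OF P] case_prod_unfold)
    then show "f \<in> span_on X (X \<times> {..k}) (\<lambda>(a, j) x. (a \<bullet> x) ^ j)"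
      unfolding span_on_def by blast
  next
    fix f assume "f \<in> span_on X (X \<times> {..k}) (\<lambda>(a, j) x. (a \<bullet> x) ^ j)"
    then obtain c where c: "f = (\<lambda>x. if x \<in> X then
        \<Sum>i\<in>X \<times> {..k}. c i * (\<lambda>(a, j) x. (a \<bullet> x) ^ j) i x else 0)"
      by (auto simp: span_on_def)
    define P where "P a = (\<Sum>j\<le>k. monom (c (a, j)) j)" for a
    have "degree (P a) \<le> k" for a
      unfolding P_def by (rule degree_sum_le) (auto intro: order_trans[OF degree_monom_le])
    then have "(\<lambda>x. if x \<in> X then \<Sum>a\<in>X. poly (P a) (a \<bullet> x) else 0) \<in> Pol X k"
      by (rule Pol_intro)
    moreover have "(\<Sum>a\<in>X. poly (P a) (a \<bullet> x)) =
        (\<Sum>i\<in>X \<times> {..k}. c i * (\<lambda>(a, j) x. (a \<bullet> x) ^ j) i x)" for x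
      by (simp add: P_def poly_sum poly_monom sum.cartesian_product case_prod_unfold)
    ultimately show "f \<in> Pol X k" unfolding c by (simp only:)
  qed
qed

lemma Pol_lincomb:
  "f \<in> Pol X k \<Longrightarrow> g \<in> Pol X k \<Longrightarrow> (\<lambda>x. a * f x + b * g x) \<in> Pol X k"
  by (simp add: Pol_eq_span_on span_on_lincomb)

lemma Pol_diff: "f \<in> Pol X k \<Longrightarrow> g \<in> Pol X k \<Longrightarrow> (\<lambda>x. f x - g x) \<in> Pol X k"
  using Pol_lincomb[of f X k g 1 "-1"] by simp

lemma Pol_scale: "f \<in> Pol X k \<Longrightarrow> (\<lambda>x. a * f x) \<in> Pol X k"
  using Pol_lincomb[of f X k f a 0] by simp

lemma Pol_sum:
  "finite J \<Longrightarrow> (\<And>j. j \<in> J \<Longrightarrow> f j \<in> Pol X k) \<Longrightarrow> (\<lambda>x. \<Sum>j\<in>J. f j x) \<in> Pol X k"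
  by (simp add: Pol_eq_span_on span_on_sum)

lemma Pol_mono: "finite X \<Longrightarrow> k \<le> k' \<Longrightarrow> Pol X k \<subseteq> Pol X k'"
  by (simp add: Pol_eq_span_on) (rule span_on_mono, auto)

text \<open>Expanding in coordinates, both sums are combinations of the moments
  m b = (SUM x:X. g x * (x \<bullet> b 0) * ... * (x \<bullet> b (j - 1))) over basis vectors b l, and the sum of
  the squares of these moments is (SUM x:X. SUM y:X. g x * g y * (x \<bullet> y) ^ j) = 0.\<close>
lemma sum_mult_prod_inner_eq_0:
  fixes g :: "'a::euclidean_space \<Rightarrow> real"
  assumes "finite X" and orth: "\<And>c. c \<in> X \<Longrightarrow> (\<Sum>x\<in>X. g x * (c \<bullet> x) ^ j) = 0"
  shows "(\<Sum>x\<in>X. g x * (\<Prod>l<j. u l \<bullet> x)) = 0"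
proof -
  define B where "B = PiE {..<j} (\<lambda>_. Basis :: 'a set)"
  have "finite B" unfolding B_def by (rule finite_PiE) auto
  have prod_inner: "(\<Prod>l<j. w l \<bullet> x) = (\<Sum>b\<in>B. \<Prod>l<j. (w l \<bullet> b l) * (x \<bullet> b l))"
    for w :: "nat \<Rightarrow> 'a" and x
  proof -
    have "(\<Prod>l<j. w l \<bullet> x) = (\<Prod>l<j. \<Sum>b\<in>Basis. (w l \<bullet> b) * (x \<bullet> b))"
      by (subst euclidean_inner) (simp add: inner_commute)
    then show ?thesis unfolding B_def by (simp add: prod_sum_PiE)
  qed
  define m where "m b = (\<Sum>x\<in>X. g x * (\<Prod>l<j. x \<bullet> b l))" for b
  have "(\<Sum>b\<in>B. m b * m b) = (\<Sum>x\<in>X. \<Sum>y\<in>X. g x * (g y * (x \<bullet> y) ^ j))"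
    using prod_inner[of "\<lambda>_. x" y for x y]
    by (simp add: m_def sum_product prod.distrib sum_distrib_left algebra_simps sum.swap[of _ B])
  also have "\<dots> = 0" using orth by (simp add: sum_distrib_left[symmetric])
  finally have "m b = 0" if "b \<in> B" for b
    using sum_nonneg_eq_0_iff[OF \<open>finite B\<close>, of "\<lambda>b. m b * m b"] that by auto
  moreover have "(\<Sum>x\<in>X. g x * (\<Prod>l<j. u l \<bullet> x)) = (\<Sum>b\<in>B. (\<Prod>l<j. u l \<bullet> b l) * m b)"
    by (simp add: prod_inner m_def prod.distrib sum_distrib_left algebra_simps sum.swap[of _ B])
  ultimately show ?thesis by simp
qed

lemma prod_inner_in_span_on_powers:
  fixes X :: "'a::euclidean_space set"
  assumes "finite X"
  shows "(\<lambda>x. if x \<in> X then \<Prod>l<j. u l \<bullet> x else 0) \<in> span_on X X (\<lambda>c x. (c \<bullet> x) ^ j)"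
proof -
  define W where "W = span_on X X (\<lambda>c x. (c \<bullet> x) ^ j)"
  obtain M where M: "is_projection X W M"
    using projection_onto_span_on_exists[OF assms assms] unfolding W_def by blast
  define h where "h = (\<lambda>x. if x \<in> X then \<Prod>l<j. u l \<bullet> x else 0)"
  define r where "r = (\<lambda>x. h x - matact X M h x)"
  have Mh: "matact X M h \<in> W" and rW: "\<And>w. w \<in> W \<Longrightarrow> inner_on X r w = 0"
    using M by (auto simp: is_projection_def r_def)
  have "(\<Sum>x\<in>X. r x * (c \<bullet> x) ^ j) = 0" if "c \<in> X" for c
    using rW[OF span_on_generator[OF assms that, where X = X and \<phi> = "\<lambda>c x. (c \<bullet> x) ^ j",
                        folded W_def]]
    by (simp add: inner_on_def)
  then have "inner_on X r h = 0"
    using sum_mult_prod_inner_eq_0[OF assms] by (simp add: inner_on_def h_def)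
  then have "inner_on X r r = 0"
    using rW[OF Mh] by (simp add: r_def inner_on_diff_right)
  then have "r x = 0" for x
    using inner_on_self_eq_0[OF assms, of r] by (cases "x \<in> X") (auto simp: r_def h_def matact_def)
  then have "h = matact X M h" by (simp add: r_def fun_eq_iff)
  then show ?thesis using Mh by (simp add: W_def h_def)
qed

lemma Pol_inner_mult_power:
  fixes X :: "'a::euclidean_space set"
  assumes "finite X"
  shows "(\<lambda>x. if x \<in> X then (y \<bullet> x) * (b \<bullet> x) ^ j else 0) \<in> Pol X (Suc j)"
proof -
  have prod_eq: "(\<Prod>l<Suc j. (if l = 0 then y else b) \<bullet> x) = (y \<bullet> x) * (b \<bullet> x) ^ j" for x
    by (simp only: prod.lessThan_Suc_shift) simp
  have "(\<lambda>x. if x \<in> X then (y \<bullet> x) * (b \<bullet> x) ^ j else 0) \<in> span_on X X (\<lambda>c x. (c \<bullet> x) ^ Suc j)"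
    using prod_inner_in_span_on_powers[OF assms, where j = "Suc j" and u = "\<lambda>l. if l = 0 then y else b"]
    by (simp only: prod_eq)
  then obtain d where d: "(\<lambda>x. if x \<in> X then (y \<bullet> x) * (b \<bullet> x) ^ j else 0) =
      (\<lambda>x. if x \<in> X then \<Sum>c\<in>X. d c * (c \<bullet> x) ^ Suc j else 0)"
    unfolding span_on_def by blast
  have "(\<lambda>x. if x \<in> X then \<Sum>c\<in>X. poly (monom (d c) (Suc j)) (c \<bullet> x) else 0) \<in> Pol X (Suc j)"
    by (rule Pol_intro) (rule degree_monom_le)
  then show ?thesis unfolding d by (simp only: poly_monom)
qed

lemma Pol_inner_mult:
  fixes X :: "'a::euclidean_space set"
  assumes "finite X" "f \<in> Pol X k"
  shows "(\<lambda>x. (y \<bullet> x) * f x) \<in> Pol X (Suc k)"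
proof -
  obtain P where P: "\<forall>a\<in>X. degree (P a) \<le> k"
    and f: "f = (\<lambda>x. if x \<in> X then \<Sum>a\<in>X. poly (P a) (a \<bullet> x) else 0)"
    using assms(2) by (auto simp: Pol_def)
  have "(\<lambda>x. if x \<in> X then (y \<bullet> x) * (a \<bullet> x) ^ j else 0) \<in> Pol X (Suc k)" if "j \<le> k" for a j
    using Pol_inner_mult_power[OF assms(1)] Pol_mono[OF assms(1), of "Suc j" "Suc k"] that by auto
  then have "(\<lambda>x. \<Sum>a\<in>X. \<Sum>j\<le>k. coeff (P a) j *
      (if x \<in> X then (y \<bullet> x) * (a \<bullet> x) ^ j else 0)) \<in> Pol X (Suc k)"
    by (intro Pol_sum Pol_scale assms) auto
  moreover have "(\<Sum>a\<in>X. \<Sum>j\<le>k. coeff (P a) j * (if x \<in> X then (y \<bullet> x) * (a \<bullet> x) ^ j else 0))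
      = (y \<bullet> x) * f x" for x
  proof -
    have "poly (P a) (a \<bullet> x) = (\<Sum>j\<le>k. coeff (P a) j * (a \<bullet> x) ^ j)" if "a \<in> X" for a
      using P that by (simp add: poly_eq_sum_coeff_atMost)
    then show ?thesis by (simp add: f sum_distrib_left algebra_simps)
  qed
  ultimately show ?thesis by simp
qed

lemma is_projection_diff:
  assumes P1: "is_projection X H1 P1" and P0: "is_projection X H0 P0" and "H0 \<subseteq> H1"
    and H1_diff: "\<And>f g. f \<in> H1 \<Longrightarrow> g \<in> H1 \<Longrightarrow> (\<lambda>x. f x - g x) \<in> H1"
  shows "is_projection X {h \<in> H1. \<forall>g\<in>H0. inner_on X h g = 0} (\<lambda>x y. P1 x y - P0 x y)"
proof -
  have act: "matact X (\<lambda>x y. P1 x y - P0 x y) f = (\<lambda>x. matact X P1 f x - matact X P0 f x)" for f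
    by (auto simp: matact_def algebra_simps sum_subtractf)
  have in1: "matact X P1 f \<in> H1" and in0: "matact X P0 f \<in> H0" for f
    using P1 P0 by (auto simp: is_projection_def)
  have o1: "g \<in> H1 \<Longrightarrow> inner_on X (\<lambda>x. f x - matact X P1 f x) g = 0"
    and o0: "g \<in> H0 \<Longrightarrow> inner_on X (\<lambda>x. f x - matact X P0 f x) g = 0" for f g
    using P1 P0 by (auto simp: is_projection_def)
  have "inner_on X (\<lambda>x. matact X P1 f x - matact X P0 f x) g = 0" if "g \<in> H0" for f g
  proof -
    have "inner_on X (\<lambda>x. matact X P1 f x - matact X P0 f x) g =
        inner_on X (\<lambda>x. f x - matact X P0 f x) g - inner_on X (\<lambda>x. f x - matact X P1 f x) g"
      by (simp add: inner_on_diff_left)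
    then show ?thesis using o0[OF that] o1[of g] that \<open>H0 \<subseteq> H1\<close> by auto
  qed
  moreover have "(\<lambda>x. matact X P1 f x - matact X P0 f x) \<in> H1" for f
    using H1_diff in1 in0 \<open>H0 \<subseteq> H1\<close> by blast
  moreover have "inner_on X (\<lambda>x. f x - (matact X P1 f x - matact X P0 f x)) h = 0"
    if "h \<in> H1" "\<forall>g\<in>H0. inner_on X h g = 0" for f h
  proof -
    have "inner_on X (\<lambda>x. f x - (matact X P1 f x - matact X P0 f x)) h =
        inner_on X (\<lambda>x. f x - matact X P1 f x) h + inner_on X h (matact X P0 f)"
      unfolding inner_on_def by (simp add: sum.distrib[symmetric] algebra_simps)
    then show ?thesis using o1[OF that(1)] that(2) in0[of f] by simp
  qed
  moreover have "is_matrix X (\<lambda>x y. P1 x y - P0 x y)"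
    using P1 P0 by (auto simp: is_projection_def is_matrix_def)
  ultimately show ?thesis by (auto simp: is_projection_def act)
qed

lemma Harm_vanishes: "f \<in> Harm X i \<Longrightarrow> x \<notin> X \<Longrightarrow> f x = 0"
  by (auto simp: Harm_def Pol_def split: if_splits)

lemma Harm_diff:
  assumes "f \<in> Harm X i" "g \<in> Harm X i"
  shows "(\<lambda>x. f x - g x) \<in> Harm X i"
proof (cases "i = 0")
  case True
  then show ?thesis using assms by (simp add: Harm_def Pol_diff)
next
  case False
  have "ipX X (\<lambda>x. f x - g x) h = ipX X f h - ipX X g h" for h
    by (simp add: ipX_eq_inner_on inner_on_diff_left diff_divide_distrib)
  then show ?thesis using assms False by (simp add: Harm_def Pol_diff)
qed

lemma Harm_eq_orthogonal_Pol:
  "finite X \<Longrightarrow> X \<noteq> {} \<Longrightarrow> i \<noteq> 0 \<Longrightarrow>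
   Harm X i = {h \<in> Pol X i. \<forall>g\<in>Pol X (i - 1). inner_on X h g = 0}"
  by (simp add: Harm_def ipX_eq_inner_on)

lemma projection_onto_Harm_exists:
  fixes X :: "'a::euclidean_space set"
  assumes "finite X" "X \<noteq> {}"
  shows "\<exists>M. is_projection X (Harm X i) M"
proof -
  have Pol_projection: "\<exists>M. is_projection X (Pol X k) M" for k
    unfolding Pol_eq_span_on using assms by (intro projection_onto_span_on_exists) auto
  show ?thesis
  proof (cases "i = 0")
    case True
    then show ?thesis using Pol_projection[of 0] by (simp add: Harm_def)
  next
    case False
    obtain P1 P0 where "is_projection X (Pol X i) P1" "is_projection X (Pol X (i - 1)) P0"
      using Pol_projection by blast
    then have "is_projection X {h \<in> Pol X i. \<forall>g\<in>Pol X (i - 1). inner_on X h g = 0}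
        (\<lambda>x y. P1 x y - P0 x y)"
      using Pol_mono[OF assms(1) diff_le_self] by (rule is_projection_diff) (auto intro: Pol_diff)
    then show ?thesis unfolding Harm_eq_orthogonal_Pol[OF assms False] by blast
  qed
qed

lemma matact_indicator:
  assumes "finite X" "y \<in> X"
  shows "matact X M (\<lambda>z. of_bool (z = y)) = (\<lambda>x. if x \<in> X then M x y else 0)"
  using assms by (intro ext) (auto simp: matact_def)

lemma Fproj_eqI:
  assumes "finite X" "X \<noteq> {}" and M: "is_projection X (Harm X i) M"
  shows "Fproj X i = M"
  unfolding Fproj_def
proof (rule the_equality)
  show "is_matrix X M \<and> (\<forall>f\<in>CX X. matact X M f \<in> Harm X i \<and>
      (\<forall>g\<in>Harm X i. ipX X (\<lambda>x. f x - matact X M f x) g = 0))"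
    using M by (simp add: is_projection_def ipX_eq_inner_on)
next
  fix M' assume M': "is_matrix X M' \<and> (\<forall>f\<in>CX X. matact X M' f \<in> Harm X i \<and>
      (\<forall>g\<in>Harm X i. ipX X (\<lambda>x. f x - matact X M' f x) g = 0))"
  have n: "real (card X) \<noteq> 0" using assms by simp
  show "M' = M"
  proof (intro ext)
    fix x y
    show "M' x y = M x y"
    proof (cases "x \<in> X \<and> y \<in> X")
      case False
      then show ?thesis using M M' by (auto simp: is_projection_def is_matrix_def)
    next
      case True
      define \<delta> where "\<delta> = (\<lambda>z. of_bool (z = y) :: real)"
      have "\<delta> \<in> CX X" using True by (auto simp: CX_def \<delta>_def)
      define D where "D = (\<lambda>z. matact X M' \<delta> z - matact X M \<delta> z)"
      have D: "D \<in> Harm X i"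
        unfolding D_def using M M' \<open>\<delta> \<in> CX X\<close> by (intro Harm_diff) (auto simp: is_projection_def)
      have "inner_on X D D = inner_on X (\<lambda>z. \<delta> z - matact X M \<delta> z) D
          - inner_on X (\<lambda>z. \<delta> z - matact X M' \<delta> z) D"
        by (simp add: D_def inner_on_diff_left[symmetric])
      also have "\<dots> = 0"
        using M M' D \<open>\<delta> \<in> CX X\<close> n by (simp add: is_projection_def ipX_eq_inner_on)
      finally have "D x = 0" using inner_on_self_eq_0[OF assms(1)] True by blast
      moreover have "matact X N \<delta> x = N x y" for N
        using matact_indicator[OF assms(1), of y N] True by (simp add: \<delta>_def)
      ultimately show ?thesis by (simp add: D_def)
    qed
  qed
qed

lemma is_projection_Fproj:
  fixes X :: "'a::euclidean_space set"
  assumes "finite X" "X \<noteq> {}"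
  shows "is_projection X (Harm X i) (Fproj X i)"
  using projection_onto_Harm_exists[OF assms] Fproj_eqI[OF assms] by blast

section \<open>Interpolation and triangular polynomial bases\<close>

lemma exists_interpolating_poly:
  fixes A :: "'a::field set"
  assumes "finite A"
  shows "\<exists>w. degree w \<le> card A - 1 \<and> (\<forall>\<alpha>\<in>A. poly w \<alpha> = h \<alpha>)"
  using assms
proof (induction A rule: finite_induct)
  case empty
  show ?case by (intro exI[of _ 0]) auto
next
  case (insert a A)
  then obtain w where w: "degree w \<le> card A - 1" "\<forall>\<alpha>\<in>A. poly w \<alpha> = h \<alpha>" by blast
  define Z where "Z = (\<Prod>\<beta>\<in>A. [:- \<beta>, 1:])"
  have poly_Z: "poly Z \<alpha> = (\<Prod>\<beta>\<in>A. \<alpha> - \<beta>)" for \<alpha> by (simp add: Z_def poly_prod)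
  have "degree Z \<le> card A"
    unfolding Z_def using degree_prod_sum_le[OF insert(1), of "\<lambda>\<beta>. [:- \<beta>, 1:]"] by simp
  then have "degree (w + smult ((h a - poly w a) / poly Z a) Z) \<le> card (insert a A) - 1"
    using w(1) insert(1,2) degree_smult_le[of _ Z]
    by (intro order_trans[OF degree_add_le_max]) auto
  moreover have "poly Z a \<noteq> 0" and "\<forall>\<alpha>\<in>A. poly Z \<alpha> = 0"
    using insert(1,2) by (auto simp: poly_Z)
  ultimately show ?case using w(2) by (intro exI[of _ "w + smult ((h a - poly w a) / poly Z a) Z"]) auto
qed

lemma coeff_sum_smult_degree_basis:
  assumes "\<forall>j\<le>k. degree (b j) = j"
  shows "coeff (\<Sum>j\<le>k. smult (c j) (b j)) k = c k * lead_coeff (b k)"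
proof -
  have "coeff (\<Sum>j\<le>k. smult (c j) (b j)) k = (\<Sum>j\<le>k. if j = k then c k * coeff (b k) k else 0)"
    unfolding coeff_sum using assms by (intro sum.cong refl) (auto simp: coeff_eq_0)
  then show ?thesis using assms by simp
qed

lemma poly_in_span_degree_basis:
  fixes b :: "nat \<Rightarrow> 'a::field poly"
  assumes "\<forall>j\<le>k. b j \<noteq> 0 \<and> degree (b j) = j" "degree p \<le> k"
  shows "\<exists>c. p = (\<Sum>j\<le>k. smult (c j) (b j))"
  using assms
proof (induction k arbitrary: p)
  case 0
  have b0: "b 0 = [:coeff (b 0) 0:]" using 0 degree_0_id by (metis le0)
  have "coeff (b 0) 0 \<noteq> 0" using 0 b0 by (metis pCons_0_0 le0)
  moreover have "p = [:coeff p 0:]" using 0 degree_0_id by (metis le_zero_eq)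
  ultimately have "p = smult (coeff p 0 / coeff (b 0) 0) (b 0)" by (subst b0) simp
  then show ?case by (intro exI[of _ "\<lambda>_. coeff p 0 / coeff (b 0) 0"]) simp
next
  case (Suc k)
  define c where "c = coeff p (Suc k) / lead_coeff (b (Suc k))"
  define r where "r = p - smult c (b (Suc k))"
  have b: "degree (b (Suc k)) = Suc k" "lead_coeff (b (Suc k)) \<noteq> 0"
    using Suc.prems(1) leading_coeff_neq_0[of "b (Suc k)"] by auto
  have "coeff r i = 0" if "k < i" for i
    using that b Suc.prems(2) by (cases "i = Suc k") (auto simp: r_def c_def coeff_eq_0)
  then have "degree r \<le> k" by (intro degree_le) auto
  then obtain d where d: "r = (\<Sum>j\<le>k. smult (d j) (b j))" using Suc by auto
  have "p = r + smult c (b (Suc k))" by (simp add: r_def)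
  also have "\<dots> = (\<Sum>j\<le>Suc k. smult ((d(Suc k := c)) j) (b j))" by (simp add: d)
  finally show ?case by blast
qed

section \<open>Predegree polynomials of an s-distance 2-design\<close>

locale s_distance_design =
  fixes X :: "'a::euclidean_space set" and s :: nat and q :: "nat \<Rightarrow> real poly"
  assumes finite_X: "finite X" and on_sphere: "on_sphere X" and design: "design2 X"
    and s_distance: "s_distance X s" and predegree: "predegree X s q"
begin

lemma X_nonempty: "X \<noteq> {}"
  using design by (simp add: design2_def)

lemma card_X_pos: "real (card X) > 0"
  using X_nonempty finite_X by (simp add: card_gt_0_iff)

lemma inner_self: "x \<in> X \<Longrightarrow> x \<bullet> x = real DIM('a)"
  using on_sphere by (simp add: on_sphere_def)

lemma inner_eq_DIM_iff: "x \<in> X \<Longrightarrow> y \<in> X \<Longrightarrow> x \<bullet> y = real DIM('a) \<longleftrightarrow> x = y"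
proof
  assume xy: "x \<in> X" "y \<in> X" "x \<bullet> y = real DIM('a)"
  have "(x - y) \<bullet> (x - y) = x \<bullet> x - 2 * (x \<bullet> y) + y \<bullet> y"
    by (simp add: inner_diff_left inner_diff_right inner_commute)
  then show "x = y" using xy inner_self by simp
qed (simp add: inner_self)

lemma finite_Aset: "finite (Aset X)"
proof -
  have "Aset X \<subseteq> (\<lambda>(x, y). x \<bullet> y) ` (X \<times> X)" by (auto simp: Aset_def)
  then show ?thesis using finite_X by (auto intro: finite_subset)
qed

lemma finite_Aset': "finite (Aset' X)"
  using finite_Aset by (simp add: Aset'_def)

lemma card_Aset': "card (Aset' X) = Suc s"
proof -
  have "real DIM('a) \<notin> Aset X" by (auto simp: Aset_def) (metis inner_eq_DIM_iff)
  then show ?thesis using finite_Aset s_distance by (simp add: Aset'_def s_distance_def)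
qed

lemma inner_in_Aset': "x \<in> X \<Longrightarrow> y \<in> X \<Longrightarrow> x \<bullet> y \<in> Aset' X"
  using inner_eq_DIM_iff by (auto simp: Aset'_def Aset_def)

lemma Aset'_witness: "\<alpha> \<in> Aset' X \<Longrightarrow> \<exists>x\<in>X. \<exists>y\<in>X. x \<bullet> y = \<alpha>"
  using X_nonempty inner_self by (auto simp: Aset'_def Aset_def)

lemma s_pos: "s \<ge> 1"
proof -
  obtain x where x: "x \<in> X" using X_nonempty by blast
  have "X \<noteq> {x}"
  proof
    assume "X = {x}"
    then have "(\<Sum>y\<in>X. x \<bullet> y) = real DIM('a)" using inner_self[OF x] by simp
    then show False using design x by (simp add: design2_def)
  qed
  then obtain y where "y \<in> X" "y \<noteq> x" using x by blast
  then have "Aset X \<noteq> {}" using x by (auto simp: Aset_def)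
  then show ?thesis
    using finite_Aset s_distance card_gt_0_iff[of "Aset X"] by (simp add: s_distance_def)
qed

lemma interpolate_on_Aset': "\<exists>w. degree w \<le> s \<and> (\<forall>\<alpha>\<in>Aset' X. poly w \<alpha> = h \<alpha>)"
  using exists_interpolating_poly[OF finite_Aset', of h] card_Aset' by auto

lemma poly_eq_0_on_Aset':
  "degree p \<le> s \<Longrightarrow> (\<And>\<alpha>. \<alpha> \<in> Aset' X \<Longrightarrow> poly p \<alpha> = 0) \<Longrightarrow> p = 0"
  using poly_eqI_degree[of "Aset' X" p 0] card_Aset' by auto

lemma q_degree: "k \<le> s \<Longrightarrow> degree (q k) = k"
  using predegree by (simp add: predegree_def)

lemma q_nonzero: "k \<le> s \<Longrightarrow> q k \<noteq> 0"
  using predegree by (simp add: predegree_def)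

lemma poly_in_span_q: "k \<le> s \<Longrightarrow> degree p \<le> k \<Longrightarrow> \<exists>c. p = (\<Sum>j\<le>k. smult (c j) (q j))"
  using q_degree q_nonzero by (intro poly_in_span_degree_basis) auto

text \<open>n^2 times the inner product ip_poly, written as a sum over pairs of points.\<close>
definition pair_sum :: "real poly \<Rightarrow> real poly \<Rightarrow> real" where
  "pair_sum p r = (\<Sum>x\<in>X. \<Sum>y\<in>X. poly p (x \<bullet> y) * poly r (x \<bullet> y))"

lemma sum_Aset'_kappa:
  "(\<Sum>\<alpha>\<in>Aset' X. real (kappa X \<alpha>) * f \<alpha>) = (\<Sum>x\<in>X. \<Sum>y\<in>X. f (x \<bullet> y))"
proof -
  let ?g = "\<lambda>(x::'a, y). x \<bullet> y"
  have per_value: "real (kappa X \<alpha>) * f \<alpha> = (\<Sum>pr\<in>{pr \<in> X \<times> X. ?g pr = \<alpha>}. f (?g pr))" for \<alpha>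
  proof -
    have "{(x, y). x \<in> X \<and> y \<in> X \<and> x \<bullet> y = \<alpha>} = {pr \<in> X \<times> X. ?g pr = \<alpha>}" by auto
    moreover have "(\<Sum>pr\<in>{pr \<in> X \<times> X. ?g pr = \<alpha>}. f (?g pr)) = (\<Sum>pr\<in>{pr \<in> X \<times> X. ?g pr = \<alpha>}. f \<alpha>)"
      by (rule sum.cong) auto
    ultimately show ?thesis by (simp add: kappa_def)
  qed
  have "(\<Sum>\<alpha>\<in>Aset' X. real (kappa X \<alpha>) * f \<alpha>) =
      (\<Sum>\<alpha>\<in>Aset' X. \<Sum>pr\<in>{pr \<in> X \<times> X. ?g pr = \<alpha>}. f (?g pr))"
    by (rule sum.cong[OF refl]) (rule per_value)
  also have "\<dots> = (\<Sum>pr\<in>X \<times> X. f (?g pr))"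
    by (rule sum.group) (use finite_X finite_Aset' inner_in_Aset' in auto)
  finally show ?thesis by (simp add: sum.cartesian_product case_prod_unfold)
qed

lemma pair_sum_q:
  "k \<le> s \<Longrightarrow> h \<le> s \<Longrightarrow>
   pair_sum (q k) (q h) = (if k = h then (real (card X))\<^sup>2 * poly (q k) (real DIM('a)) else 0)"
  using predegree card_X_pos sum_Aset'_kappa[of "\<lambda>\<alpha>. poly (q k) \<alpha> * poly (q h) \<alpha>"]
  unfolding predegree_def ip_poly_def pair_sum_def by (auto simp: field_simps mult.assoc)

lemma pair_sum_sum_smult_left:
  "pair_sum (\<Sum>j\<in>J. smult (c j) (p j)) r = (\<Sum>j\<in>J. c j * pair_sum (p j) r)"
  by (simp add: pair_sum_def poly_sum sum_distrib_left sum_distrib_right algebra_simps)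
     (subst sum.swap, rule sum.cong, simp, subst sum.swap, simp)

lemma pair_sum_commute: "pair_sum p r = pair_sum r p"
  by (simp add: pair_sum_def mult.commute)

lemma pair_sum_pCons_0_commute: "pair_sum (pCons 0 p) r = pair_sum (pCons 0 r) p"
  by (simp add: pair_sum_def algebra_simps)

lemma pair_sum_smult_left: "pair_sum (smult c p) r = c * pair_sum p r"
  by (simp add: pair_sum_def sum_distrib_left mult_ac)

lemma pair_sum_smult_right: "pair_sum p (smult c r) = c * pair_sum p r"
  by (simp add: pair_sum_def sum_distrib_left mult_ac)

lemma pair_sum_expansion_q:
  assumes "i \<le> s" "k \<le> s"
  shows "pair_sum (\<Sum>j\<le>k. smult (c j) (q j)) (q i) =
    (if i \<le> k then c i * (real (card X))\<^sup>2 * poly (q i) (real DIM('a)) else 0)"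
proof -
  have "pair_sum (\<Sum>j\<le>k. smult (c j) (q j)) (q i) =
      (\<Sum>j\<le>k. if j = i then c i * ((real (card X))\<^sup>2 * poly (q i) (real DIM('a))) else 0)"
    unfolding pair_sum_sum_smult_left using assms by (intro sum.cong refl) (auto simp: pair_sum_q)
  then show ?thesis by simp
qed

lemma pair_sum_q_lower_degree:
  assumes "i \<le> s" "degree p < i"
  shows "pair_sum p (q i) = 0"
proof -
  obtain c where "p = (\<Sum>j\<le>degree p. smult (c j) (q j))"
    using poly_in_span_q[of "degree p" p] assms by auto
  then show ?thesis using pair_sum_expansion_q[of i "degree p" c] assms by simp
qed

lemma sum_square_pairs_eq_0:
  fixes f :: "real \<Rightarrow> real"
  assumes "(\<Sum>x\<in>X. \<Sum>y\<in>X. f (x \<bullet> y) * f (x \<bullet> y)) = 0" "\<alpha> \<in> Aset' X"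
  shows "f \<alpha> = 0"
proof -
  obtain x y where xy: "x \<in> X" "y \<in> X" "x \<bullet> y = \<alpha>" using Aset'_witness assms(2) by blast
  have "(\<Sum>y\<in>X. f (x \<bullet> y) * f (x \<bullet> y)) = 0"
    using assms(1) xy(1) sum_nonneg_eq_0_iff[OF finite_X, of "\<lambda>x. \<Sum>y\<in>X. f (x \<bullet> y) * f (x \<bullet> y)"]
    by (simp add: sum_nonneg)
  then have "f (x \<bullet> y) * f (x \<bullet> y) = 0"
    using xy(2) sum_nonneg_eq_0_iff[OF finite_X, of "\<lambda>y. f (x \<bullet> y) * f (x \<bullet> y)"] by simp
  then show ?thesis using xy by simp
qed

lemma pair_sum_self_pos: "degree p \<le> s \<Longrightarrow> p \<noteq> 0 \<Longrightarrow> pair_sum p p > 0"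
  using sum_square_pairs_eq_0[of "poly p"] poly_eq_0_on_Aset'[of p]
  by (force simp: pair_sum_def less_le sum_nonneg)

lemma q_at_DIM_pos: "k \<le> s \<Longrightarrow> poly (q k) (real DIM('a)) > 0"
  using pair_sum_self_pos[of "q k"] pair_sum_q[of k k] q_degree q_nonzero card_X_pos
  by (auto simp: zero_less_mult_iff)

lemma q_coeff_eq_0_iff:
  assumes "p = (\<Sum>j\<le>s. smult (c j) (q j))" "j \<le> s"
  shows "c j = 0 \<longleftrightarrow> pair_sum p (q j) = 0"
  using pair_sum_expansion_q[OF assms(2) order_refl, of c] q_at_DIM_pos[OF assms(2)] card_X_pos assms
  by auto

text \<open>Pairing the sum of all q j with q i gives n^2 q_i(m), exactly as for the function that is n at
  t = m and 0 elsewhere; so their difference h pairs to zero with its own interpolant, i.e.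
  the sum of h((x \<bullet> y))^2 over all pairs vanishes.\<close>
lemma sum_q_inner:
  assumes "x \<in> X" "y \<in> X"
  shows "(\<Sum>j\<le>s. poly (q j) (x \<bullet> y)) = (if x = y then real (card X) else 0)"
proof -
  define n where "n = real (card X)"
  define r where "r = (\<Sum>j\<le>s. q j)"
  define h where "h \<alpha> = poly r \<alpha> - (if \<alpha> = real DIM('a) then n else 0)" for \<alpha>
  obtain w where w: "degree w \<le> s" "\<forall>\<alpha>\<in>Aset' X. poly w \<alpha> = h \<alpha>"
    using interpolate_on_Aset' by blast
  obtain c where c: "w = (\<Sum>j\<le>s. smult (c j) (q j))" using poly_in_span_q[OF order_refl w(1)] by blast
  have "pair_sum r w = (\<Sum>j\<le>s. 1 * pair_sum (q j) w)"
    unfolding r_def using pair_sum_sum_smult_left[of "\<lambda>_. 1" q "{..s}" w] by simp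
  then have "pair_sum w r = (\<Sum>j\<le>s. pair_sum w (q j))" by (simp add: pair_sum_commute)
  also have "\<dots> = (\<Sum>j\<le>s. c j * n\<^sup>2 * poly (q j) (real DIM('a)))"
    by (intro sum.cong refl) (simp add: c pair_sum_expansion_q n_def)
  also have "\<dots> = n\<^sup>2 * poly w (real DIM('a))"
    by (simp add: c poly_sum sum_distrib_left mult_ac)
  finally have wr: "pair_sum w r = n\<^sup>2 * poly w (real DIM('a))" .
  have h_sq: "h (x \<bullet> y) * h (x \<bullet> y) =
      poly w (x \<bullet> y) * poly r (x \<bullet> y) - (if x = y then n * poly w (x \<bullet> y) else 0)"
    if "x \<in> X" "y \<in> X" for x y
  proof -
    have w_eq: "poly w (x \<bullet> y) = h (x \<bullet> y)" using w(2) inner_in_Aset'[OF that] by simp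
    show ?thesis unfolding w_eq using inner_eq_DIM_iff[OF that]
      by (cases "x = y") (simp_all add: h_def algebra_simps)
  qed
  have "(\<Sum>x\<in>X. \<Sum>y\<in>X. h (x \<bullet> y) * h (x \<bullet> y)) =
      (\<Sum>x\<in>X. \<Sum>y\<in>X. poly w (x \<bullet> y) * poly r (x \<bullet> y) - (if x = y then n * poly w (x \<bullet> y) else 0))"
    using h_sq by simp
  also have "\<dots> = pair_sum w r - (\<Sum>x\<in>X. n * poly w (real DIM('a)))"
    using finite_X inner_self by (simp add: pair_sum_def sum_subtractf)
  also have "\<dots> = 0" by (simp add: wr n_def power2_eq_square)
  finally have "h (x \<bullet> y) = 0" using sum_square_pairs_eq_0 inner_in_Aset' assms by blast
  then show ?thesis using assms inner_eq_DIM_iff by (auto simp: h_def r_def poly_sum n_def)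
qed

text \<open>The top coefficient of t * q k in the basis q j is
  lead_coeff (q k) / lead_coeff (q (k + 1)), which is nonzero.\<close>
lemma pair_sum_pCons_0_q_next:
  assumes k: "Suc k \<le> s"
  shows "pair_sum (pCons 0 (q k)) (q (Suc k)) \<noteq> 0"
proof -
  have "degree (pCons 0 (q k)) \<le> Suc k"
    using degree_pCons_le[of 0 "q k"] q_degree[of k] k by linarith
  then obtain e where e: "pCons 0 (q k) = (\<Sum>i\<le>Suc k. smult (e i) (q i))"
    using poly_in_span_q[OF k] by blast
  have "coeff (pCons 0 (q k)) (Suc k) = e (Suc k) * lead_coeff (q (Suc k))"
    unfolding e using q_degree k by (intro coeff_sum_smult_degree_basis) auto
  moreover have "coeff (pCons 0 (q k)) (Suc k) \<noteq> 0"
    using q_degree[of k] q_nonzero[of k] leading_coeff_neq_0[of "q k"] k by simp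
  ultimately have "e (Suc k) \<noteq> 0" by auto
  then show ?thesis
    unfolding e using pair_sum_expansion_q[OF k k, of e] q_at_DIM_pos[OF k] card_X_pos by simp
qed

text \<open>On the values Aset' X, t * q (k + 1) is a combination of q k, ..., q s with a nonzero
  coefficient at q k: its pairing with q j equals that of q (k + 1) with t * q j.\<close>
lemma q_recurrence:
  assumes k: "Suc k \<le> s"
  shows "\<exists>c. c k \<noteq> 0 \<and>
    (\<forall>\<alpha>\<in>Aset' X. \<alpha> * poly (q (Suc k)) \<alpha> = (\<Sum>j\<in>{k..s}. c j * poly (q j) \<alpha>))"
proof -
  obtain w where w: "degree w \<le> s" "\<forall>\<alpha>\<in>Aset' X. poly w \<alpha> = \<alpha> * poly (q (Suc k)) \<alpha>"
    using interpolate_on_Aset'[of "\<lambda>\<alpha>. \<alpha> * poly (q (Suc k)) \<alpha>"] by blast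
  obtain c where c: "w = (\<Sum>j\<le>s. smult (c j) (q j))" using poly_in_span_q[OF order_refl w(1)] by blast
  have w_pair: "pair_sum w (q j) = pair_sum (pCons 0 (q j)) (q (Suc k))" for j
    unfolding pair_sum_pCons_0_commute[symmetric] pair_sum_def
    using w(2) inner_in_Aset' by (intro sum.cong refl) simp
  have low: "c j = 0" if "j < k" for j
  proof -
    have "degree (pCons 0 (q j)) < Suc k"
      using q_degree[of j] degree_pCons_le[of 0 "q j"] that k by simp
    then show ?thesis
      using q_coeff_eq_0_iff[OF c, of j] pair_sum_q_lower_degree[OF k] w_pair that k by simp
  qed
  have "c k \<noteq> 0"
    using q_coeff_eq_0_iff[OF c, of k] w_pair pair_sum_pCons_0_q_next[OF k] k by simp
  moreover have "\<alpha> * poly (q (Suc k)) \<alpha> = (\<Sum>j\<in>{k..s}. c j * poly (q j) \<alpha>)" if "\<alpha> \<in> Aset' X" for \<alpha>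
  proof -
    have "(\<Sum>j\<le>s. c j * poly (q j) \<alpha>) = (\<Sum>j\<in>{..<k} \<union> {k..s}. c j * poly (q j) \<alpha>)"
      using k by (intro sum.cong) auto
    also have "\<dots> = (\<Sum>j\<in>{k..s}. c j * poly (q j) \<alpha>)"
      using low by (subst sum.union_disjoint) auto
    finally show ?thesis using w(2) that by (simp add: c poly_sum)
  qed
  ultimately show ?thesis by blast
qed

definition zonal :: "nat \<Rightarrow> 'a \<Rightarrow> 'a \<Rightarrow> real" where
  "zonal k y = (\<lambda>x. if x \<in> X then poly (q k) (y \<bullet> x) else 0)"

lemma zonal_in_Pol:
  assumes "k \<le> s" "y \<in> X"
  shows "zonal k y \<in> Pol X k"
proof -
  have sum_eq: "(\<Sum>a\<in>X. poly (if a = y then q k else 0) (a \<bullet> x)) = poly (q k) (y \<bullet> x)" for x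
  proof -
    have "(\<Sum>a\<in>X. poly (if a = y then q k else 0) (a \<bullet> x)) =
        (\<Sum>a\<in>X. if a = y then poly (q k) (a \<bullet> x) else 0)"
      by (rule sum.cong) auto
    then show ?thesis using finite_X assms(2) by simp
  qed
  have "zonal k y = (\<lambda>x. if x \<in> X then \<Sum>a\<in>X. poly (if a = y then q k else 0) (a \<bullet> x) else 0)"
    by (simp only: zonal_def sum_eq)
  also have "\<dots> \<in> Pol X k" using q_degree assms(1) by (intro Pol_intro) auto
  finally show ?thesis .
qed

lemma Pol_eq_zonal_sum:
  assumes "k \<le> s" "f \<in> Pol X k"
  shows "\<exists>c. \<forall>x\<in>X. f x = (\<Sum>j\<le>k. \<Sum>a\<in>X. c j a * zonal j a x)"
proof -
  obtain P where P: "\<forall>a\<in>X. degree (P a) \<le> k"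
    and f: "f = (\<lambda>x. if x \<in> X then \<Sum>a\<in>X. poly (P a) (a \<bullet> x) else 0)"
    using assms(2) by (auto simp: Pol_def)
  have "\<forall>a\<in>X. \<exists>d. P a = (\<Sum>j\<le>k. smult (d j) (q j))" using poly_in_span_q assms(1) P by blast
  then have "\<exists>D. \<forall>a\<in>X. P a = (\<Sum>j\<le>k. smult (D a j) (q j))" by (rule bchoice)
  then obtain D where D: "\<forall>a\<in>X. P a = (\<Sum>j\<le>k. smult (D a j) (q j))" by blast
  have "f x = (\<Sum>j\<le>k. \<Sum>a\<in>X. D a j * zonal j a x)" if x: "x \<in> X" for x
  proof -
    have "f x = (\<Sum>a\<in>X. poly (P a) (a \<bullet> x))" using x by (simp add: f)
    also have "\<dots> = (\<Sum>a\<in>X. \<Sum>j\<le>k. D a j * poly (q j) (a \<bullet> x))"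
      using D by (intro sum.cong refl) (simp add: poly_sum)
    also have "\<dots> = (\<Sum>j\<le>k. \<Sum>a\<in>X. D a j * zonal j a x)"
      by (subst sum.swap) (simp add: zonal_def x)
    finally show ?thesis .
  qed
  then show ?thesis by (intro exI[of _ "\<lambda>j a. D a j"]) blast
qed

lemma sum_zonal:
  "x \<in> X \<Longrightarrow> z \<in> X \<Longrightarrow> (\<Sum>j\<le>s. zonal j z x) = (if x = z then real (card X) else 0)"
  using sum_q_inner[of z x] by (auto simp: zonal_def)

definition zonal_orthogonal :: "nat \<Rightarrow> bool" where
  "zonal_orthogonal k \<longleftrightarrow> (\<forall>y\<in>X. \<forall>g\<in>Pol X (k - 1). inner_on X (zonal k y) g = 0)"

text \<open>On X the recurrence expresses c k * zonal k y as (y \<bullet> x) * zonal (k + 1) y x minus higher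
  zonal functions, and multiplying g \<in> Pol X (k - 1) by the linear form y \<bullet> x stays in Pol X k.\<close>
lemma zonal_orthogonal_step:
  assumes k: "1 \<le> k" "Suc k \<le> s" and higher: "\<And>j. k < j \<Longrightarrow> j \<le> s \<Longrightarrow> zonal_orthogonal j"
  shows "zonal_orthogonal k"
  unfolding zonal_orthogonal_def
proof (intro ballI)
  fix y g assume y: "y \<in> X" and g: "g \<in> Pol X (k - 1)"
  obtain c where ck: "c k \<noteq> 0"
    and rec: "\<forall>\<alpha>\<in>Aset' X. \<alpha> * poly (q (Suc k)) \<alpha> = (\<Sum>j\<in>{k..s}. c j * poly (q j) \<alpha>)"
    using q_recurrence[OF k(2)] by blast
  have "{k..s} = insert k {Suc k..s}" using k by auto
  then have zonal_rec: "c k * zonal k y x =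
      (y \<bullet> x) * zonal (Suc k) y x - (\<Sum>j\<in>{Suc k..s}. c j * zonal j y x)" for x
    using rec inner_in_Aset'[OF y, of x] by (auto simp: zonal_def)
  have "(\<lambda>x. (y \<bullet> x) * g x) \<in> Pol X k"
    using Pol_inner_mult[OF finite_X g, of y] k(1) by simp
  then have "inner_on X (zonal (Suc k) y) (\<lambda>x. (y \<bullet> x) * g x) = 0"
    using higher[of "Suc k"] k y by (simp add: zonal_orthogonal_def)
  then have "inner_on X (\<lambda>x. (y \<bullet> x) * zonal (Suc k) y x) g = 0"
    by (simp add: inner_on_def mult_ac)
  moreover have "inner_on X g (zonal j y) = 0" if "j \<in> {Suc k..s}" for j
  proof -
    have "k - 1 \<le> j - 1" using that by auto
    then have "g \<in> Pol X (j - 1)" using g Pol_mono[OF finite_X] by blast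
    then show ?thesis using higher[of j] that y by (auto simp: zonal_orthogonal_def inner_on_commute)
  qed
  moreover have "c k * inner_on X (zonal k y) g = inner_on X (\<lambda>x. c k * zonal k y x) g"
    by (simp add: inner_on_scale_left)
  moreover have "\<dots> = inner_on X (\<lambda>x. (y \<bullet> x) * zonal (Suc k) y x) g -
      (\<Sum>j\<in>{Suc k..s}. c j * inner_on X g (zonal j y))"
    unfolding zonal_rec
    by (simp add: inner_on_diff_left inner_on_commute[of X _ g] inner_on_sum_right inner_on_scale_right)
  ultimately have "c k * inner_on X (zonal k y) g = 0" by simp
  then show "inner_on X (zonal k y) g = 0" using ck by simp
qed

lemma zonal_orthogonal_downward:
  assumes "zonal_orthogonal s" "1 \<le> k" "k \<le> s"
  shows "zonal_orthogonal k"
  using assms(2,3)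
proof (induction "s - k" arbitrary: k rule: less_induct)
  case less
  show ?case
  proof (cases "k = s")
    case True
    then show ?thesis using assms(1) by simp
  next
    case False
    show ?thesis
    proof (rule zonal_orthogonal_step)
      show "1 \<le> k" "Suc k \<le> s" using less.prems False by auto
      show "zonal_orthogonal j" if "k < j" "j \<le> s" for j
        using less.hyps[of j] less.prems that by auto
    qed
  qed
qed

lemma Fproj_column_in_Harm:
  assumes "y \<in> X"
  shows "(\<lambda>x. if x \<in> X then Fproj X k x y else 0) \<in> Harm X k"
proof -
  have "matact X (Fproj X k) (\<lambda>z. of_bool (z = y)) \<in> Harm X k"
    using is_projection_Fproj[OF finite_X X_nonempty, of k] by (simp add: is_projection_def)
  then show ?thesis by (simp add: matact_indicator[OF finite_X assms])
qed

lemma zonal_orthogonal_top_if_Fproj_top: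
  assumes hyp: "\<forall>x\<in>X. \<forall>y\<in>X.
    Fproj X s x y = (1 / real (card X)) * poly (q s) (real (card X) * Gram X x y)"
  shows "zonal_orthogonal s"
  unfolding zonal_orthogonal_def
proof (intro ballI)
  fix y g assume y: "y \<in> X" and g: "g \<in> Pol X (s - 1)"
  have "(\<lambda>x. if x \<in> X then Fproj X s x y else 0) = (\<lambda>x. (1 / real (card X)) * zonal s y x)"
    using hyp y card_X_pos by (auto simp: Gram_def zonal_def inner_commute)
  then have "(\<lambda>x. (1 / real (card X)) * zonal s y x) \<in> Harm X s"
    using Fproj_column_in_Harm[OF y, of s] by simp
  then have "inner_on X (\<lambda>x. (1 / real (card X)) * zonal s y x) g = 0"
    using g s_pos card_X_pos by (auto simp: Harm_def ipX_eq_inner_on)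
  moreover have "inner_on X (\<lambda>x. (1 / real (card X)) * zonal s y x) g =
      (1 / real (card X)) * inner_on X (zonal s y) g"
    by (rule inner_on_scale_left)
  ultimately show "inner_on X (zonal s y) g = 0" using card_X_pos by simp
qed

definition zonal_mat :: "nat \<Rightarrow> 'a \<Rightarrow> 'a \<Rightarrow> real" where
  "zonal_mat k = (\<lambda>x y. if x \<in> X \<and> y \<in> X then poly (q k) (x \<bullet> y) / real (card X) else 0)"

lemma matact_zonal_mat:
  "matact X (zonal_mat k) f = (\<lambda>x. \<Sum>y\<in>X. (f y / real (card X)) * zonal k y x)"
  by (rule ext) (auto simp: matact_def zonal_mat_def zonal_def inner_commute intro!: sum.cong)

lemma inner_on_matact_zonal_mat:
  "inner_on X (matact X (zonal_mat k) f) g = (\<Sum>y\<in>X. f y * inner_on X (zonal k y) g) / real (card X)"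
proof -
  have "inner_on X (matact X (zonal_mat k) f) g =
      (\<Sum>x\<in>X. \<Sum>y\<in>X. (f y / real (card X)) * zonal k y x * g x)"
    by (simp add: matact_zonal_mat inner_on_def sum_distrib_right)
  also have "\<dots> = (\<Sum>y\<in>X. (f y / real (card X)) * inner_on X (zonal k y) g)"
    by (subst sum.swap) (simp add: inner_on_def sum_distrib_left mult.assoc)
  finally show ?thesis by (simp add: sum_divide_distrib)
qed

abbreviation BM where "BM \<equiv> bose_mesner X (Aset' X) (Rel X)"

lemma bose_mesner_iff:
  "M \<in> BM \<longleftrightarrow>
   (\<exists>c. M = (\<lambda>x y. if x \<in> X \<and> y \<in> X then c (x \<bullet> y) else 0))"
proof -
  have "(\<Sum>\<alpha>\<in>Aset' X. c \<alpha> * adj X (Rel X \<alpha>) x y) = (if x \<in> X \<and> y \<in> X then c (x \<bullet> y) else 0)"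
    for c x y
  proof (cases "x \<in> X \<and> y \<in> X")
    case True
    then have "(\<Sum>\<alpha>\<in>Aset' X. c \<alpha> * adj X (Rel X \<alpha>) x y) = (\<Sum>\<alpha>\<in>Aset' X. if \<alpha> = x \<bullet> y then c \<alpha> else 0)"
      by (intro sum.cong) (auto simp: adj_def Rel_def)
    then show ?thesis using finite_Aset' inner_in_Aset' True by simp
  qed (auto simp: adj_def Rel_def)
  then show ?thesis unfolding bose_mesner_def by simp
qed

definition zonal_comb :: "(nat \<Rightarrow> real) \<Rightarrow> 'a \<Rightarrow> 'a \<Rightarrow> real" where
  "zonal_comb d = (\<lambda>x y. \<Sum>j\<le>s. d j * zonal_mat j x y)"

lemma zonal_mat_nonzero: "i \<le> s \<Longrightarrow> \<exists>x\<in>X. \<exists>y\<in>X. zonal_mat i x y \<noteq> 0"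
proof (rule ccontr)
  assume i: "i \<le> s" and "\<not> (\<exists>x\<in>X. \<exists>y\<in>X. zonal_mat i x y \<noteq> 0)"
  then have "poly (q i) (x \<bullet> y) = 0" if "x \<in> X" "y \<in> X" for x y
    using that card_X_pos by (auto simp: zonal_mat_def)
  then have "\<forall>\<alpha>\<in>Aset' X. poly (q i) \<alpha> = 0" using Aset'_witness by blast
  then have "q i = 0" using poly_eq_0_on_Aset' q_degree i by auto
  then show False using q_nonzero i by simp
qed

lemma zonal_comb_of_bool:
  "i \<le> s \<Longrightarrow> zonal_comb (\<lambda>j. d j * of_bool (j = i)) = (\<lambda>x y. d i * zonal_mat i x y)"
proof (intro ext)
  fix x y assume "i \<le> s"
  have "zonal_comb (\<lambda>j. d j * of_bool (j = i)) x y =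
      (\<Sum>j\<le>s. if j = i then d i * zonal_mat i x y else 0)"
    unfolding zonal_comb_def by (intro sum.cong) auto
  then show "zonal_comb (\<lambda>j. d j * of_bool (j = i)) x y = d i * zonal_mat i x y"
    using \<open>i \<le> s\<close> by simp
qed

lemma zonal_mat_eq_zonal_comb: "i \<le> s \<Longrightarrow> zonal_mat i = zonal_comb (\<lambda>j. of_bool (j = i))"
  using zonal_comb_of_bool[of i "\<lambda>_. 1"] by simp

lemma zonal_comb_add: "(\<lambda>x y. zonal_comb d1 x y + zonal_comb d2 x y) = zonal_comb (\<lambda>j. d1 j + d2 j)"
  by (intro ext) (simp add: zonal_comb_def sum.distrib algebra_simps)

lemma zonal_comb_eq:
  "zonal_comb d = (\<lambda>x y. if x \<in> X \<and> y \<in> X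
      then (\<Sum>j\<le>s. d j * poly (q j) (x \<bullet> y)) / real (card X) else 0)"
proof (intro ext)
  fix x y
  show "zonal_comb d x y = (if x \<in> X \<and> y \<in> X
      then (\<Sum>j\<le>s. d j * poly (q j) (x \<bullet> y)) / real (card X) else 0)"
  proof (cases "x \<in> X \<and> y \<in> X")
    case True
    then show ?thesis by (simp add: zonal_comb_def zonal_mat_def sum_divide_distrib)
  next
    case False
    then have "zonal_mat j x y = 0" for j by (auto simp: zonal_mat_def)
    then show ?thesis using False by (auto simp: zonal_comb_def)
  qed
qed

text \<open>A function of the inner product is interpolated on the s + 1 values Aset' X by a polynomial
  of degree at most s, which expands in q 0, ..., q s.\<close>
lemma bose_mesner_eq_zonal_comb:
  "M \<in> BM \<longleftrightarrow> (\<exists>d. M = zonal_comb d)"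
proof
  assume "M \<in> BM"
  then obtain c where c: "M = (\<lambda>x y. if x \<in> X \<and> y \<in> X then c (x \<bullet> y) else 0)"
    using bose_mesner_iff by blast
  obtain w where w: "degree w \<le> s" "\<forall>\<alpha>\<in>Aset' X. poly w \<alpha> = c \<alpha>"
    using interpolate_on_Aset'[of c] by blast
  obtain e where e: "w = (\<Sum>j\<le>s. smult (e j) (q j))" using poly_in_span_q[OF order_refl w(1)] by blast
  have "(\<Sum>j\<le>s. real (card X) * e j * poly (q j) t) / real (card X) = poly w t" for t
    using card_X_pos by (simp add: e poly_sum sum_distrib_left[symmetric] mult.assoc)
  then have "M = zonal_comb (\<lambda>j. real (card X) * e j)"
    unfolding zonal_comb_eq c using w(2) inner_in_Aset' by (intro ext) auto
  then show "\<exists>d. M = zonal_comb d" by blast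
next
  assume "\<exists>d. M = zonal_comb d"
  then obtain d where "M = zonal_comb d" by blast
  then show "M \<in> BM"
    unfolding bose_mesner_iff zonal_comb_eq
    by (intro exI[of _ "\<lambda>t. (\<Sum>j\<le>s. d j * poly (q j) t) / real (card X)"]) simp
qed

lemma adj_Rel_in_bose_mesner: "adj X (Rel X \<alpha>) \<in> BM"
  unfolding bose_mesner_iff
  by (intro exI[of _ "\<lambda>t. of_bool (t = \<alpha>)"]) (auto simp: adj_def Rel_def fun_eq_iff)

lemma card_paths_eq_mmul_adj:
  assumes "x \<in> X" "y \<in> X"
  shows "real (card {z \<in> X. (x, z) \<in> Rel X \<alpha> \<and> (z, y) \<in> Rel X \<beta>}) =
    mmul X (adj X (Rel X \<alpha>)) (adj X (Rel X \<beta>)) x y"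
proof -
  have "real (card {z \<in> X. (x, z) \<in> Rel X \<alpha> \<and> (z, y) \<in> Rel X \<beta>}) =
      (\<Sum>z\<in>X. of_bool ((x, z) \<in> Rel X \<alpha> \<and> (z, y) \<in> Rel X \<beta>))"
    using finite_X by (simp add: Int_def conj_commute)
  also have "\<dots> = mmul X (adj X (Rel X \<alpha>)) (adj X (Rel X \<beta>)) x y"
    unfolding mmul_def using assms by (intro sum.cong refl) (auto simp: adj_def Rel_def)
  finally show ?thesis .
qed

text \<open>Since q 1 is linear, every q i is a polynomial of degree i in q 1.\<close>
lemma zonal_mat_poly_zonal_mat_1:
  assumes i: "i \<le> s"
  shows "\<exists>v. degree v = i \<and> (\<forall>x\<in>X. \<forall>y\<in>X.
    real (card X) * zonal_mat i x y = poly v (real (card X) * zonal_mat 1 x y))"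
proof -
  define a where "a = coeff (q 1) 1"
  define b where "b = coeff (q 1) 0"
  have a: "a \<noteq> 0" using q_nonzero[OF s_pos] q_degree[OF s_pos] leading_coeff_neq_0[of "q 1"]
    by (simp add: a_def)
  have q1: "poly (q 1) t = b + a * t" for t
    using poly_altdef[of "q 1" t] q_degree[OF s_pos] by (simp add: a_def b_def)
  define v where "v = pcompose (q i) [:- b / a, 1 / a:]"
  have "poly v (b + a * t) = poly (q i) t" for t
    using a by (simp add: v_def poly_pcompose field_simps)
  moreover have "real (card X) * zonal_mat k x y = poly (q k) (x \<bullet> y)" if "x \<in> X" "y \<in> X" for k x y
    using that card_X_pos by (simp add: zonal_mat_def)
  ultimately have "real (card X) * zonal_mat i x y = poly v (real (card X) * zonal_mat 1 x y)"
    if "x \<in> X" "y \<in> X" for x y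
    using that by (simp add: q1[unfolded One_nat_def])
  moreover have "degree v = i" using q_degree[OF i] a by (simp add: v_def degree_pcompose)
  ultimately show ?thesis by blast
qed

lemma design_sum_inner: "y \<in> X \<Longrightarrow> (\<Sum>x\<in>X. y \<bullet> x) = 0"
  using design by (simp add: design2_def)

lemma design_sum_inner_mult_inner:
  assumes "x \<in> X" "y \<in> X"
  shows "(\<Sum>z\<in>X. (x \<bullet> z) * (z \<bullet> y)) = real (card X) * (x \<bullet> y)"
proof -
  have "(1 / real (card X)) * (\<Sum>z\<in>X. (x \<bullet> z) * (z \<bullet> y)) = x \<bullet> y"
    using design assms by (simp only: design2_def)
  then show ?thesis using card_X_pos by (simp add: field_simps)
qed

lemma Pol_0_const:
  assumes "g \<in> Pol X 0"
  shows "\<exists>C. \<forall>x\<in>X. g x = C"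
proof -
  obtain P where P: "\<forall>a\<in>X. degree (P a) \<le> 0"
    and g: "g = (\<lambda>x. if x \<in> X then \<Sum>a\<in>X. poly (P a) (a \<bullet> x) else 0)"
    using assms by (auto simp: Pol_def)
  have "poly (P a) t = coeff (P a) 0" if "a \<in> X" for a t
    using poly_eq_sum_coeff_atMost[of "P a" 0 t] P that by simp
  then show ?thesis by (intro exI[of _ "\<Sum>a\<in>X. coeff (P a) 0"]) (simp add: g)
qed

lemma Pol_1_affine:
  assumes "h \<in> Pol X 1"
  shows "\<exists>C c. \<forall>x\<in>X. h x = C + (\<Sum>a\<in>X. c a * (a \<bullet> x))"
proof -
  obtain P where P: "\<forall>a\<in>X. degree (P a) \<le> 1"
    and h: "h = (\<lambda>x. if x \<in> X then \<Sum>a\<in>X. poly (P a) (a \<bullet> x) else 0)"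
    using assms by (auto simp: Pol_def)
  have "poly (P a) t = coeff (P a) 0 + coeff (P a) 1 * t" if "a \<in> X" for a t
    using poly_eq_sum_coeff_atMost[of "P a" 1 t] P that by simp
  then have "\<forall>x\<in>X. h x = (\<Sum>a\<in>X. coeff (P a) 0) + (\<Sum>a\<in>X. coeff (P a) 1 * (a \<bullet> x))"
    by (simp add: h sum.distrib)
  then show ?thesis by (intro exI[of _ "\<Sum>a\<in>X. coeff (P a) 0"] exI[of _ "\<lambda>a. coeff (P a) 1"])
qed

lemma matact_Gram:
  "matact X (Gram X) f = (\<lambda>x. if x \<in> X then \<Sum>y\<in>X. (f y / real (card X)) * (y \<bullet> x) else 0)"
  by (intro ext) (auto simp: matact_def Gram_def inner_commute intro!: sum.cong)

lemma matact_Gram_in_Harm_1: "matact X (Gram X) f \<in> Harm X 1"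
proof -
  have "(\<lambda>x. if x \<in> X then \<Sum>a\<in>X. poly [:0, f a / real (card X):] (a \<bullet> x) else 0) \<in> Pol X 1"
    by (rule Pol_intro) simp
  then have "matact X (Gram X) f \<in> Pol X 1" by (simp add: matact_Gram mult.commute cong: if_cong)
  moreover have "inner_on X (matact X (Gram X) f) g = 0" if g: "g \<in> Pol X 0" for g
  proof -
    obtain C where C: "\<forall>x\<in>X. g x = C" using Pol_0_const[OF g] by blast
    have "inner_on X (matact X (Gram X) f) g = (\<Sum>x\<in>X. \<Sum>y\<in>X. (f y / real (card X)) * C * (y \<bullet> x))"
      using C by (simp add: inner_on_def matact_Gram sum_distrib_left sum_distrib_right mult_ac)
    also have "\<dots> = (\<Sum>y\<in>X. (f y / real (card X)) * C * (\<Sum>x\<in>X. y \<bullet> x))"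
      by (subst sum.swap) (simp add: sum_distrib_left)
    finally show ?thesis by (simp add: design_sum_inner)
  qed
  ultimately show ?thesis using card_X_pos by (simp add: Harm_def ipX_eq_inner_on)
qed

lemma Harm_1_linear:
  assumes h: "h \<in> Harm X 1"
  shows "\<exists>c. \<forall>x\<in>X. h x = (\<Sum>a\<in>X. c a * (a \<bullet> x))"
proof -
  have hP: "h \<in> Pol X 1" and h_orth: "\<forall>g\<in>Pol X 0. inner_on X h g = 0"
    using h card_X_pos by (auto simp: Harm_def ipX_eq_inner_on)
  obtain C c where Cc: "\<forall>x\<in>X. h x = C + (\<Sum>a\<in>X. c a * (a \<bullet> x))"
    using Pol_1_affine[OF hP] by blast
  have "(\<lambda>x. if x \<in> X then \<Sum>a\<in>X. poly [:1 / real (card X):] (a \<bullet> x) else 0) \<in> Pol X 0"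
    by (rule Pol_intro) simp
  then have "(\<lambda>x. if x \<in> X then 1 else 0) \<in> Pol X 0" using card_X_pos by (simp cong: if_cong)
  then have "inner_on X h (\<lambda>x. if x \<in> X then 1 else 0) = 0" using h_orth by blast
  then have "(\<Sum>x\<in>X. h x) = 0" by (simp add: inner_on_def cong: sum.cong_simp)
  moreover have "(\<Sum>x\<in>X. h x) = real (card X) * C + (\<Sum>a\<in>X. c a * (\<Sum>x\<in>X. a \<bullet> x))"
    using Cc by (simp add: sum.distrib sum_distrib_left) (rule sum.swap)
  ultimately have "C = 0" using design_sum_inner card_X_pos by simp
  then show ?thesis using Cc by auto
qed

lemma inner_on_matact_Gram_linear:
  assumes h: "\<forall>x\<in>X. h x = (\<Sum>a\<in>X. c a * (a \<bullet> x))"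
  shows "inner_on X (matact X (Gram X) f) h = inner_on X f h"
proof -
  let ?u = "\<lambda>y. f y / real (card X)"
  have "inner_on X (matact X (Gram X) f) h =
      (\<Sum>x\<in>X. (\<Sum>y\<in>X. ?u y * (y \<bullet> x)) * (\<Sum>a\<in>X. c a * (a \<bullet> x)))"
    using h by (simp add: inner_on_def matact_Gram)
  also have "\<dots> = (\<Sum>y\<in>X. \<Sum>a\<in>X. \<Sum>x\<in>X. (?u y * (y \<bullet> x)) * (c a * (a \<bullet> x)))"
    by (simp add: sum_product) (subst sum.swap, rule sum.cong[OF refl], rule sum.swap)
  also have "\<dots> = (\<Sum>y\<in>X. \<Sum>a\<in>X. ?u y * c a * (\<Sum>x\<in>X. (y \<bullet> x) * (x \<bullet> a)))"
    by (simp add: sum_distrib_left mult_ac inner_commute[of a for a])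
  also have "\<dots> = (\<Sum>y\<in>X. \<Sum>a\<in>X. f y * c a * (y \<bullet> a))"
    using card_X_pos by (intro sum.cong refl) (simp add: design_sum_inner_mult_inner)
  also have "\<dots> = (\<Sum>y\<in>X. f y * (\<Sum>a\<in>X. c a * (a \<bullet> y)))"
    by (simp add: sum_distrib_left mult_ac inner_commute)
  also have "\<dots> = inner_on X f h" using h by (simp add: inner_on_def)
  finally show ?thesis .
qed

text \<open>The two 2-design conditions say that the Gram matrix annihilates constants and restricts
  to the identity on linear functions.\<close>
lemma is_projection_Gram: "is_projection X (Harm X 1) (Gram X)"
proof -
  have "inner_on X (\<lambda>x. f x - matact X (Gram X) f x) h = 0" if h: "h \<in> Harm X 1" for f h
  proof -
    obtain c where "\<forall>x\<in>X. h x = (\<Sum>a\<in>X. c a * (a \<bullet> x))" using Harm_1_linear[OF h] by blast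
    then have "inner_on X (matact X (Gram X) f) h = inner_on X f h"
      by (rule inner_on_matact_Gram_linear)
    then show ?thesis by (simp add: inner_on_diff_left)
  qed
  moreover have "is_matrix X (Gram X)" by (simp add: is_matrix_def Gram_def)
  ultimately show ?thesis using matact_Gram_in_Harm_1 by (simp add: is_projection_def)
qed

lemma Fproj_1_eq_Gram: "Fproj X 1 = Gram X"
  by (rule Fproj_eqI[OF finite_X X_nonempty is_projection_Gram])

lemma pair_sum_q_eq_0_if_Fproj_poly:
  assumes j: "j < k" and k: "k \<le> s"
    and V: "\<forall>x\<in>X. \<forall>y\<in>X. real (card X) * Fproj X k x y = poly V (x \<bullet> y)"
  shows "pair_sum V (q j) = 0"
proof -
  define col where "col y = (\<lambda>x. if x \<in> X then Fproj X k x y else 0)" for y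
  have "poly V (x \<bullet> y) * poly (q j) (x \<bullet> y) = real (card X) * (col y x * zonal j y x)"
    if "x \<in> X" "y \<in> X" for x y
    using V that by (simp add: col_def zonal_def inner_commute[of y x])
  then have "pair_sum V (q j) = (\<Sum>y\<in>X. \<Sum>x\<in>X. real (card X) * (col y x * zonal j y x))"
    unfolding pair_sum_def by (subst sum.swap) (intro sum.cong refl, simp)
  also have "\<dots> = (\<Sum>y\<in>X. real (card X) * inner_on X (col y) (zonal j y))"
    by (simp add: inner_on_def sum_distrib_left)
  also have "\<dots> = 0"
  proof (intro sum.neutral ballI)
    fix y assume y: "y \<in> X"
    have "j \<le> k - 1" using j by auto
    then have "zonal j y \<in> Pol X (k - 1)" using zonal_in_Pol[of j y] y j k Pol_mono[OF finite_X] by auto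
    then show "real (card X) * inner_on X (col y) (zonal j y) = 0"
      using Fproj_column_in_Harm[OF y, of k] j card_X_pos
      by (auto simp: Harm_def ipX_eq_inner_on col_def)
  qed
  finally show ?thesis .
qed

text \<open>The diagonal entry of the symmetric idempotent F_k is the squared norm of its column.\<close>
lemma pair_sum_self_if_Fproj_poly:
  assumes V: "\<forall>x\<in>X. \<forall>y\<in>X. real (card X) * Fproj X k x y = poly V (x \<bullet> y)"
  shows "pair_sum V V = (real (card X))\<^sup>2 * poly V (real DIM('a))"
proof -
  define n where "n = real (card X)"
  define F where "F = Fproj X k"
  define col where "col y = (\<lambda>x. if x \<in> X then F x y else 0)" for y
  have n: "n > 0" using card_X_pos by (simp add: n_def)
  have FV: "F x y = poly V (x \<bullet> y) / n" if "x \<in> X" "y \<in> X" for x y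
    using V that n by (simp add: F_def n_def field_simps)
  have "(\<Sum>x\<in>X. F x y * F x y) = F y y" if y: "y \<in> X" for y
  proof -
    have "matact X F (col y) = col y"
      unfolding F_def col_def
      by (rule is_projection_fixes[OF finite_X is_projection_Fproj[OF finite_X X_nonempty]
            Fproj_column_in_Harm[OF y]]) (auto intro: Harm_diff Harm_vanishes)
    then have "matact X F (col y) y = col y y" by simp
    then have "(\<Sum>x\<in>X. F y x * F x y) = F y y"
      using y by (simp add: matact_def col_def cong: sum.cong_simp)
    moreover have "F y x = F x y" if "x \<in> X" for x using FV y that by (simp add: inner_commute)
    ultimately show ?thesis by simp
  qed
  then have "(\<Sum>x\<in>X. poly V (x \<bullet> y) * poly V (x \<bullet> y)) = n * poly V (real DIM('a))" if "y \<in> X" for y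
    using that FV inner_self n by (simp add: sum_divide_distrib[symmetric] field_simps)
  then show ?thesis
    unfolding pair_sum_def by (subst sum.swap) (simp add: n_def power2_eq_square)
qed

lemma q_top_eq_if_Fproj_top:
  assumes deg: "degree V = s"
    and V: "\<forall>x\<in>X. \<forall>y\<in>X. real (card X) * Fproj X s x y = poly V (x \<bullet> y)"
  shows "V = q s"
proof -
  obtain c where c: "V = (\<Sum>j\<le>s. smult (c j) (q j))" using poly_in_span_q[of s V] deg by auto
  have "c j = 0" if "j < s" for j
    using q_coeff_eq_0_iff[OF c] pair_sum_q_eq_0_if_Fproj_poly[OF that order_refl V] that by simp
  then have Vc: "V = smult (c s) (q s)"
    by (simp add: c lessThan_Suc_atMost[symmetric] lessThan_Suc)
  have "c s \<noteq> 0" using Vc deg s_pos by auto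
  have "pair_sum V V = c s * c s * ((real (card X))\<^sup>2 * poly (q s) (real DIM('a)))"
    using pair_sum_q[of s s] by (simp add: Vc pair_sum_smult_left pair_sum_smult_right)
  then have "c s * c s = c s"
    using pair_sum_self_if_Fproj_poly[OF V] Vc card_X_pos q_at_DIM_pos[of s] by simp
  then show ?thesis using Vc \<open>c s \<noteq> 0\<close> by simp
qed

lemma Fproj_top_if_Q_poly_scheme:
  assumes "Q_poly_scheme X s"
  shows "\<forall>x\<in>X. \<forall>y\<in>X. Fproj X s x y = (1 / real (card X)) * poly (q s) (real (card X) * Gram X x y)"
proof -
  have nGram: "real (card X) * Gram X x y = x \<bullet> y" if "x \<in> X" "y \<in> X" for x y
    using that card_X_pos by (simp add: Gram_def)
  obtain V where deg: "degree V = s"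
    and V1: "\<forall>x\<in>X. \<forall>y\<in>X. real (card X) * Fproj X s x y = poly V (real (card X) * Fproj X 1 x y)"
    using assms unfolding Q_poly_scheme_def by blast
  have V: "\<forall>x\<in>X. \<forall>y\<in>X. real (card X) * Fproj X s x y = poly V (x \<bullet> y)"
    using V1 nGram unfolding Fproj_1_eq_Gram by simp
  then show ?thesis
    using q_top_eq_if_Fproj_top[OF deg V] card_X_pos nGram by (simp add: field_simps)
qed

end

section \<open>Orthogonal zonal functions give a Q-polynomial scheme\<close>

locale zonal_design = s_distance_design +
  assumes zonal_orthogonal_top: "zonal_orthogonal s"
begin

lemma inner_on_zonal:
  assumes "i \<le> s" "j \<le> s" "y \<in> X" "z \<in> X"
  shows "inner_on X (zonal j y) (zonal i z) =
    (if i = j then real (card X) * poly (q j) (y \<bullet> z) else 0)"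
proof -
  have lower: "inner_on X (zonal j y) (zonal i z) = 0"
    if "i < j" "j \<le> s" "y \<in> X" "z \<in> X" for i j y z
  proof -
    have "i \<le> j - 1" using that by auto
    then have "zonal i z \<in> Pol X (j - 1)"
      using zonal_in_Pol[of i z] Pol_mono[OF finite_X] that by auto
    then show ?thesis
      using zonal_orthogonal_downward[OF zonal_orthogonal_top, of j] that
      by (auto simp: zonal_orthogonal_def)
  qed
  have off_diag: "inner_on X (zonal j y) (zonal i z) = 0" if "i \<noteq> j" "i \<le> s" "j \<le> s" for i j
    using lower[of i j y z] lower[of j i z y] that assms(3,4)
    by (cases "i < j") (auto simp: inner_on_commute)
  show ?thesis
  proof (cases "i = j")
    case True
    have "zonal j z x = (if x = z then real (card X) else 0) - (\<Sum>i\<in>{..s} - {j}. zonal i z x)"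
      if "x \<in> X" for x
      using sum_zonal[OF that assms(4)] sum.remove[of "{..s}" j "\<lambda>i. zonal i z x"] assms(2) by simp
    then have "inner_on X (zonal j y) (zonal j z) = inner_on X (zonal j y)
        (\<lambda>x. (if x = z then real (card X) else 0) - (\<Sum>i\<in>{..s} - {j}. zonal i z x))"
      by (intro inner_on_cong) auto
    also have "\<dots> = real (card X) * poly (q j) (y \<bullet> z)"
      using off_diag assms finite_X
      by (simp add: inner_on_diff_right inner_on_sum_right)
         (simp add: inner_on_def zonal_def if_distrib cong: if_cong)
    finally show ?thesis using True by simp
  qed (use off_diag assms in auto)
qed

lemma Harm_eq_zonal_sum:
  assumes "k \<le> s" "g \<in> Harm X k"
  shows "\<exists>c. \<forall>x\<in>X. g x = (\<Sum>a\<in>X. c a * zonal k a x)"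
proof -
  have gP: "g \<in> Pol X k" using assms(2) by (simp add: Harm_def split: if_splits)
  obtain c where c: "\<forall>x\<in>X. g x = (\<Sum>j\<le>k. \<Sum>a\<in>X. c j a * zonal j a x)"
    using Pol_eq_zonal_sum[OF assms(1) gP] by blast
  define u where "u = (\<lambda>x. \<Sum>j<k. \<Sum>a\<in>X. c j a * zonal j a x)"
  define v where "v = (\<lambda>x. \<Sum>a\<in>X. c k a * zonal k a x)"
  have guv: "g x = u x + v x" if "x \<in> X" for x
    using c that by (simp add: u_def v_def lessThan_Suc_atMost[symmetric])
  have "inner_on X v (zonal j b) = 0" if "j < k" "b \<in> X" for j b
    using inner_on_zonal[of j k _ b] that assms(1)
    by (simp add: v_def inner_on_sum_scale_left finite_X)
  then have vu: "inner_on X v u = 0"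
    by (simp add: u_def inner_on_sum_right inner_on_scale_right finite_X)
  have gu: "inner_on X g u = 0"
  proof (cases "k = 0")
    case True
    then show ?thesis by (simp add: u_def inner_on_def)
  next
    case False
    have "zonal j a \<in> Pol X (k - 1)" if "j < k" "a \<in> X" for j a
    proof -
      have "j \<le> k - 1" using that by auto
      then show ?thesis using zonal_in_Pol[of j a] Pol_mono[OF finite_X] that assms(1) by auto
    qed
    then have "u \<in> Pol X (k - 1)"
      unfolding u_def using finite_X by (intro Pol_sum Pol_scale) auto
    then show ?thesis using assms(2) False card_X_pos by (simp add: Harm_def ipX_eq_inner_on)
  qed
  have "inner_on X u u = inner_on X g u - inner_on X v u"
    by (simp add: inner_on_diff_left[symmetric] guv cong: inner_on_cong)
  then have "u x = 0" if "x \<in> X" for x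
    using gu vu inner_on_self_eq_0[OF finite_X] that by simp
  then show ?thesis using guv by (intro exI[of _ "c k"]) (simp add: v_def)
qed

lemma inner_on_matact_zonal_mat_zonal:
  assumes k: "k \<le> s" and a: "a \<in> X"
  shows "inner_on X (matact X (zonal_mat k) f) (zonal k a) = inner_on X f (zonal k a)"
proof -
  have "inner_on X (matact X (zonal_mat k) f) (zonal k a) =
      (\<Sum>y\<in>X. f y * (real (card X) * poly (q k) (y \<bullet> a))) / real (card X)"
    unfolding inner_on_matact_zonal_mat using inner_on_zonal[OF k k _ a] by simp
  also have "\<dots> = (\<Sum>y\<in>X. f y * poly (q k) (y \<bullet> a))"
    using card_X_pos by (simp add: sum_distrib_left[symmetric] mult.left_commute[of "f _"])
  also have "\<dots> = inner_on X f (zonal k a)"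
    by (simp add: inner_on_def zonal_def inner_commute)
  finally show ?thesis .
qed

lemma matact_zonal_mat_in_Harm:
  assumes k: "k \<le> s"
  shows "matact X (zonal_mat k) f \<in> Harm X k"
proof -
  have "matact X (zonal_mat k) f \<in> Pol X k"
    unfolding matact_zonal_mat using k finite_X by (intro Pol_sum Pol_scale zonal_in_Pol) auto
  moreover have "inner_on X (matact X (zonal_mat k) f) g = 0" if "k \<noteq> 0" "g \<in> Pol X (k - 1)" for g
    using zonal_orthogonal_downward[OF zonal_orthogonal_top, of k] that k
    by (simp add: inner_on_matact_zonal_mat zonal_orthogonal_def)
  ultimately show ?thesis using card_X_pos by (auto simp: Harm_def ipX_eq_inner_on)
qed

lemma is_projection_zonal_mat:
  assumes k: "k \<le> s"
  shows "is_projection X (Harm X k) (zonal_mat k)"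
proof -
  have "inner_on X (\<lambda>x. f x - matact X (zonal_mat k) f x) g = 0" if g: "g \<in> Harm X k" for f g
  proof -
    obtain c where c: "\<forall>x\<in>X. g x = (\<Sum>a\<in>X. c a * zonal k a x)"
      using Harm_eq_zonal_sum[OF k g] by blast
    have "inner_on X (\<lambda>x. f x - matact X (zonal_mat k) f x) g =
        inner_on X (\<lambda>x. f x - matact X (zonal_mat k) f x) (\<lambda>x. \<Sum>a\<in>X. c a * zonal k a x)"
      using c by (intro inner_on_cong) auto
    also have "\<dots> = (\<Sum>a\<in>X. c a *
        (inner_on X f (zonal k a) - inner_on X (matact X (zonal_mat k) f) (zonal k a)))"
      using finite_X
      by (simp add: inner_on_sum_scale_right inner_on_diff_left right_diff_distrib sum_subtractf)
    finally show ?thesis using inner_on_matact_zonal_mat_zonal[OF k] by simp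
  qed
  moreover have "is_matrix X (zonal_mat k)" by (simp add: is_matrix_def zonal_mat_def)
  ultimately show ?thesis using matact_zonal_mat_in_Harm[OF k] by (simp add: is_projection_def)
qed

lemma Fproj_eq_zonal_mat: "k \<le> s \<Longrightarrow> Fproj X k = zonal_mat k"
  using Fproj_eqI[OF finite_X X_nonempty is_projection_zonal_mat] .

lemma zonal_mat_mult:
  assumes "i \<le> s" "j \<le> s"
  shows "mmul X (zonal_mat i) (zonal_mat j) = (if i = j then zonal_mat i else (\<lambda>x y. 0))"
proof (intro ext)
  fix x y
  show "mmul X (zonal_mat i) (zonal_mat j) x y = (if i = j then zonal_mat i else (\<lambda>x y. 0)) x y"
  proof (cases "x \<in> X \<and> y \<in> X")
    case True
    then have "mmul X (zonal_mat i) (zonal_mat j) x y =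
        inner_on X (zonal i x) (zonal j y) / (real (card X))\<^sup>2"
      by (simp add: mmul_def zonal_mat_def inner_on_def zonal_def inner_commute power2_eq_square
          sum_divide_distrib)
    then show ?thesis
      using inner_on_zonal[OF assms(2,1), of x y] True card_X_pos
      by (auto simp: zonal_mat_def power2_eq_square)
  qed (auto simp: mmul_def zonal_mat_def)
qed

lemma zonal_comb_mult: "mmul X (zonal_comb d) (zonal_comb d') = zonal_comb (\<lambda>j. d j * d' j)"
proof (intro ext)
  fix x y
  have "mmul X (zonal_comb d) (zonal_comb d') x y =
      (\<Sum>z\<in>X. \<Sum>i\<le>s. \<Sum>j\<le>s. d i * d' j * (zonal_mat i x z * zonal_mat j z y))"
    by (simp add: mmul_def zonal_comb_def sum_product algebra_simps)
  also have "\<dots> = (\<Sum>i\<le>s. \<Sum>j\<le>s. d i * d' j * mmul X (zonal_mat i) (zonal_mat j) x y)"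
    by (simp add: mmul_def sum_distrib_left)
       (subst sum.swap, rule sum.cong, simp, subst sum.swap, simp)
  also have "\<dots> = (\<Sum>i\<le>s. \<Sum>j\<le>s. if j = i then d i * d' i * zonal_mat i x y else 0)"
    by (intro sum.cong refl) (auto simp: zonal_mat_mult)
  finally show "mmul X (zonal_comb d) (zonal_comb d') x y = zonal_comb (\<lambda>j. d j * d' j) x y"
    by (simp add: zonal_comb_def)
qed

lemma zonal_comb_eq_iff: "zonal_comb d = zonal_comb d' \<longleftrightarrow> (\<forall>j\<le>s. d j = d' j)"
proof
  assume eq: "zonal_comb d = zonal_comb d'"
  show "\<forall>j\<le>s. d j = d' j"
  proof (intro allI impI)
    fix i assume i: "i \<le> s"
    have select: "mmul X (zonal_comb e) (zonal_mat i) = (\<lambda>x y. e i * zonal_mat i x y)" for e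
      by (simp add: zonal_mat_eq_zonal_comb[OF i] zonal_comb_mult zonal_comb_of_bool[OF i])
    obtain x y where "x \<in> X" "y \<in> X" "zonal_mat i x y \<noteq> 0" using zonal_mat_nonzero[OF i] by blast
    moreover have "d i * zonal_mat i x y = d' i * zonal_mat i x y"
      using select[of d] select[of d'] eq by metis
    ultimately show "d i = d' i" by simp
  qed
qed (auto simp: zonal_comb_def intro!: ext sum.cong)

lemma zonal_comb_eq_0_iff: "zonal_comb d = (\<lambda>x y. 0) \<longleftrightarrow> (\<forall>j\<le>s. d j = 0)"
proof -
  have "(\<lambda>x y. 0) = zonal_comb (\<lambda>_. 0)" by (simp add: zonal_comb_def)
  then show ?thesis by (simp add: zonal_comb_eq_iff)
qed

lemma idem_zonal_comb: "idem X (zonal_comb d) \<longleftrightarrow> (\<forall>j\<le>s. d j * d j = d j)"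
  by (simp add: idem_def zonal_comb_mult zonal_comb_eq_iff)

lemma zonal_mat_primitive:
  assumes k: "k \<le> s"
  shows "zonal_mat k \<in> primitive_idempotents X (Aset' X) (Rel X)"
proof -
  have not_split: False
    if h: "idem X (zonal_comb d1)" "idem X (zonal_comb d2)"
      "zonal_comb d1 \<noteq> (\<lambda>x y. 0)" "zonal_comb d2 \<noteq> (\<lambda>x y. 0)"
      "mmul X (zonal_comb d1) (zonal_comb d2) = (\<lambda>x y. 0)"
      "zonal_mat k = (\<lambda>x y. zonal_comb d1 x y + zonal_comb d2 x y)" for d1 d2
  proof -
    have idem: "\<forall>j\<le>s. d1 j * d1 j = d1 j" "\<forall>j\<le>s. d2 j * d2 j = d2 j"
      using h(1,2) by (simp_all add: idem_zonal_comb)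
    have orth: "\<forall>j\<le>s. d1 j * d2 j = 0"
      using h(5) by (simp add: zonal_comb_mult zonal_comb_eq_0_iff)
    have sum: "\<forall>j\<le>s. d1 j + d2 j = of_bool (j = k)"
      using h(6) k by (simp add: zonal_comb_add zonal_mat_eq_zonal_comb zonal_comb_eq_iff)
    obtain j1 where j1: "j1 \<le> s" "d1 j1 \<noteq> 0" using h(3) by (auto simp: zonal_comb_eq_0_iff)
    obtain j2 where j2: "j2 \<le> s" "d2 j2 \<noteq> 0" using h(4) by (auto simp: zonal_comb_eq_0_iff)
    have "d1 j1 = 1" "d2 j2 = 1" using idem j1 j2 by (metis mult_cancel_right2)+
    then have "d2 j1 = 0" "d1 j2 = 0" using orth j1 j2 by (metis mult_cancel_left1 mult.commute)+
    then have "j1 = k" "j2 = k" using sum j1 j2 \<open>d1 j1 = 1\<close> \<open>d2 j2 = 1\<close>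
      by (metis add_0 add_0_right of_bool_eq_0_iff one_neq_zero)+
    then show False using \<open>d1 j1 = 1\<close> \<open>d1 j2 = 0\<close> by simp
  qed
  have "zonal_mat k \<in> BM" "idem X (zonal_mat k)" "zonal_mat k \<noteq> (\<lambda>x y. 0)"
    using k by (auto simp: zonal_mat_eq_zonal_comb bose_mesner_eq_zonal_comb idem_zonal_comb
        zonal_comb_eq_0_iff)
  moreover have "\<not> (\<exists>E1\<in>BM. \<exists>E2\<in>BM. idem X E1 \<and> idem X E2 \<and> E1 \<noteq> (\<lambda>x y. 0) \<and>
      E2 \<noteq> (\<lambda>x y. 0) \<and> mmul X E1 E2 = (\<lambda>x y. 0) \<and> zonal_mat k = (\<lambda>x y. E1 x y + E2 x y))"
    using not_split unfolding bose_mesner_eq_zonal_comb Bex_def mem_Collect_eq by blast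
  ultimately show ?thesis unfolding primitive_idempotents_def by blast
qed

lemma primitive_is_zonal_mat:
  assumes M: "M \<in> primitive_idempotents X (Aset' X) (Rel X)"
  shows "M \<in> zonal_mat ` {0..s}"
proof -
  obtain d where d: "M = zonal_comb d"
    using M bose_mesner_eq_zonal_comb unfolding primitive_idempotents_def by blast
  have idem: "\<forall>j\<le>s. d j * d j = d j"
    using M d idem_zonal_comb unfolding primitive_idempotents_def by blast
  obtain k where k: "k \<le> s" "d k \<noteq> 0"
    using M d zonal_comb_eq_0_iff unfolding primitive_idempotents_def by auto
  have dk: "d k = 1" using idem k by (metis mult_cancel_right2)
  define \<delta> where "\<delta> j = (of_bool (j = k) :: real)" for j
  show ?thesis
  proof (cases "\<forall>j\<le>s. d j = \<delta> j")
    case True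
    then have "M = zonal_mat k"
      using d k by (simp add: zonal_mat_eq_zonal_comb zonal_comb_eq_iff \<delta>_def)
    then show ?thesis using k by auto
  next
    case False
    then obtain j where j: "j \<le> s" "d j \<noteq> \<delta> j" by blast
    then have "j \<noteq> k" "d j = 1" using idem dk by (auto simp: \<delta>_def)
    define d2 where "d2 i = d i - \<delta> i" for i
    have "idem X (zonal_comb \<delta>)" "idem X (zonal_comb d2)"
      using idem dk by (auto simp: idem_zonal_comb \<delta>_def d2_def)
    moreover have "zonal_comb \<delta> \<noteq> (\<lambda>x y. 0)" "zonal_comb d2 \<noteq> (\<lambda>x y. 0)"
      using k j \<open>j \<noteq> k\<close> \<open>d j = 1\<close> by (auto simp: zonal_comb_eq_0_iff \<delta>_def d2_def)
    moreover have "mmul X (zonal_comb \<delta>) (zonal_comb d2) = (\<lambda>x y. 0)"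
      using dk by (auto simp: zonal_comb_mult zonal_comb_eq_0_iff \<delta>_def d2_def)
    moreover have "M = (\<lambda>x y. zonal_comb \<delta> x y + zonal_comb d2 x y)"
      by (simp add: zonal_comb_add d zonal_comb_eq_iff d2_def)
    moreover have "zonal_comb \<delta> \<in> BM" "zonal_comb d2 \<in> BM" by (auto simp: bose_mesner_eq_zonal_comb)
    ultimately have "\<exists>E1\<in>BM. \<exists>E2\<in>BM. idem X E1 \<and> idem X E2 \<and> E1 \<noteq> (\<lambda>x y. 0) \<and>
        E2 \<noteq> (\<lambda>x y. 0) \<and> mmul X E1 E2 = (\<lambda>x y. 0) \<and> M = (\<lambda>x y. E1 x y + E2 x y)"
      by blast
    then show ?thesis using M unfolding primitive_idempotents_def by blast
  qed
qed

lemma primitive_idempotents_eq: "primitive_idempotents X (Aset' X) (Rel X) = zonal_mat ` {0..s}"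
  using zonal_mat_primitive primitive_is_zonal_mat by auto

lemma bose_mesner_mmul_closed: "M \<in> BM \<Longrightarrow> N \<in> BM \<Longrightarrow> mmul X M N \<in> BM"
  by (auto simp: bose_mesner_eq_zonal_comb zonal_comb_mult)

lemma sym_assoc_scheme: "sym_assoc_scheme X (Aset' X) (Rel X)"
proof -
  have intersection_number: "\<exists>p::nat. \<forall>x y. (x, y) \<in> Rel X \<gamma> \<longrightarrow>
      card {z \<in> X. (x, z) \<in> Rel X \<alpha> \<and> (z, y) \<in> Rel X \<beta>} = p"
    if \<gamma>: "\<gamma> \<in> Aset' X" for \<alpha> \<beta> \<gamma>
  proof -
    obtain c where c: "mmul X (adj X (Rel X \<alpha>)) (adj X (Rel X \<beta>)) =
        (\<lambda>x y. if x \<in> X \<and> y \<in> X then c (x \<bullet> y) else 0)"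
      using bose_mesner_mmul_closed[OF adj_Rel_in_bose_mesner adj_Rel_in_bose_mesner]
      unfolding bose_mesner_iff by blast
    have count: "real (card {z \<in> X. (x, z) \<in> Rel X \<alpha> \<and> (z, y) \<in> Rel X \<beta>}) = c \<gamma>"
      if "(x, y) \<in> Rel X \<gamma>" for x y
    proof -
      have "x \<in> X" "y \<in> X" "x \<bullet> y = \<gamma>" using that by (auto simp: Rel_def)
      then show ?thesis using card_paths_eq_mmul_adj[of x y \<alpha> \<beta>] by (simp add: c)
    qed
    obtain x0 y0 where x0y0: "(x0, y0) \<in> Rel X \<gamma>"
      using Aset'_witness[OF \<gamma>] by (auto simp: Rel_def)
    have "card {z \<in> X. (x, z) \<in> Rel X \<alpha> \<and> (z, y) \<in> Rel X \<beta>} =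
        card {z \<in> X. (x0, z) \<in> Rel X \<alpha> \<and> (z, y0) \<in> Rel X \<beta>}" if "(x, y) \<in> Rel X \<gamma>" for x y
      using count[OF that] count[OF x0y0] by simp
    then show ?thesis by blast
  qed
  have "Rel X (real DIM('a)) = Id_on X" using inner_eq_DIM_iff by (auto simp: Rel_def Id_on_def)
  then have "\<exists>\<alpha>\<in>Aset' X. Rel X \<alpha> = Id_on X" by (auto simp: Aset'_def)
  moreover have "\<forall>\<alpha>\<in>Aset' X. Rel X \<alpha> \<subseteq> X \<times> X \<and> Rel X \<alpha> \<noteq> {}"
    using Aset'_witness by (fastforce simp: Rel_def)
  moreover have "\<forall>x\<in>X. \<forall>y\<in>X. \<exists>!\<alpha>. \<alpha> \<in> Aset' X \<and> (x, y) \<in> Rel X \<alpha>"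
    using inner_in_Aset' by (auto simp: Rel_def)
  moreover have "\<forall>\<alpha>\<in>Aset' X. \<forall>x y. (x, y) \<in> Rel X \<alpha> \<longrightarrow> (y, x) \<in> Rel X \<alpha>"
    by (auto simp: Rel_def inner_commute)
  moreover have "\<forall>\<alpha>\<in>Aset' X. \<forall>\<beta>\<in>Aset' X. \<forall>\<gamma>\<in>Aset' X. \<exists>p::nat. \<forall>x y. (x, y) \<in> Rel X \<gamma> \<longrightarrow>
      card {z \<in> X. (x, z) \<in> Rel X \<alpha> \<and> (z, y) \<in> Rel X \<beta>} = p"
    by (intro ballI) (rule intersection_number)
  ultimately show ?thesis
    unfolding sym_assoc_scheme_def using finite_X finite_Aset' by (intro conjI) simp_all
qed

lemma Q_poly_scheme: "Q_poly_scheme X s"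
proof -
  have "Fproj X ` {0..s} = zonal_mat ` {0..s}" using Fproj_eq_zonal_mat by (intro image_cong) auto
  then show ?thesis
    unfolding Q_poly_scheme_def using sym_assoc_scheme primitive_idempotents_eq
      zonal_mat_poly_zonal_mat_1 Fproj_eq_zonal_mat s_pos by simp
qed

end

theorem lemma4p2:
  fixes X :: "'a::euclidean_space set" and s :: nat and q :: "nat \<Rightarrow> real poly"
  assumes "DIM('a) \<ge> 1"
    and "finite X" and "on_sphere X"
    and "design2 X"
    and "s_distance X s"
    and "degX X = s"
    and "predegree X s q"
  shows "Q_poly_scheme X s \<longleftrightarrow>
    (\<forall>x\<in>X. \<forall>y\<in>X. Fproj X s x y =
        (1 / real (card X)) * poly (q s) (real (card X) * Gram X x y))"
proof -
  interpret s_distance_design X s q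
    using assms by unfold_locales
  show ?thesis
  proof
    assume "Q_poly_scheme X s"
    then show "\<forall>x\<in>X. \<forall>y\<in>X. Fproj X s x y =
        (1 / real (card X)) * poly (q s) (real (card X) * Gram X x y)"
      by (rule Fproj_top_if_Q_poly_scheme)
  next
    assume "\<forall>x\<in>X. \<forall>y\<in>X. Fproj X s x y =
        (1 / real (card X)) * poly (q s) (real (card X) * Gram X x y)"
    then have "zonal_design X s q"
      by unfold_locales (rule zonal_orthogonal_top_if_Fproj_top)
    then show "Q_poly_scheme X s" by (rule zonal_design.Q_poly_scheme)
  qed
qed

end
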